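(* Let $d\ge3$ be odd, and define $\hat B=\frac{1}{\sqrt{d+1}}\sum_{\mathbf q\in(\mathbb Z_d^2)^*}\hat D_{\mathbf q}$ and $\hat U=\frac1d(1+\sqrt{d+1}\,\hat B)=\frac1d\sum_{\mathbf q\in\mathbb Z_d^2}\hat D_{\mathbf q}$. Then $\hat U$ is Hermitian, $\hat U^2=1$, $\operatorname{Tr}\hat U=1$, and $\hat U$ has eigenvalue $+1$ with multiplicity $(d+1)/2$ and eigenvalue $-1$ with multiplicity $(d-1)/2$; moreover $\hat U|r\rangle=|{-r}\bmod d\rangle$ for all $r$. Consequently the smallest eigenvalue of $\hat B$ is $-\sqrt{d+1}$, and the $d^2$ operators $$\hat E_{\mathbf p}=\frac{1}{d^2}\Big(1+\frac{1}{\sqrt{d+1}}\hat D_{\mathbf p}\hat B\hat D_{\mathbf p}^\dagger\Big),\qquad \mathbf p\in\mathbb Z_d^2,$$ form a symmetric informationally complete POVM in which every element has rank $(d+1)/2$, with efficiency parameter $1/\sqrt{d+1}$.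
   Context: Weyl–Heisenberg notation: orthonormal basis $|0\rangle,\dots,|d-1\rangle$ of $\mathbb C^d$, $\tau=-e^{\pi i/d}$, $\hat T|r\rangle=\tau^{2r}|r\rangle$, $\hat S|r\rangle=|r+1\bmod d\rangle$, $\hat D_{\mathbf p}=\tau^{p_1p_2}\hat S^{p_1}\hat T^{p_2}$ for $\mathbf p=(p_1,p_2)\in\mathbb Z^2$; $\mathbb Z_d^2=\{0,\dots,d-1\}^2$, $(\mathbb Z_d^2)^*=\mathbb Z_d^2\setminus\{(0,0)\}$. A POVM is symmetric if $\operatorname{Tr}(\hat E_r\hat E_s)=\alpha+\beta\delta_{rs}$ for constants $\alpha,\beta$, and informationally complete if the probabilities $\operatorname{Tr}(\hat\rho\hat E_r)$ determine every density matrix $\hat\rho$. For such a POVM written as $\hat E_r=\frac{1}{d^2}(1+\hat B'_r)$ with $\hat B'_r$ trace-zero Hermitian, the efficiency parameter is $\kappa=\|\hat B'_r\|$, where $\|\hat B\|^2=\frac{1}{d(d-1)}\operatorname{Tr}(\hat B^2)$. *)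

theory Defs
  imports Complex_Main "Jordan_Normal_Form.Schur_Decomposition"
    "Jordan_Normal_Form.DL_Rank"
begin

definition mtrace :: "complex mat \<Rightarrow> complex" where
  "mtrace A = (\<Sum>i<dim_row A. A $$ (i,i))"

definition tau :: "nat \<Rightarrow> complex" where
  "tau d = - cis (pi / real d)"

definition shiftS :: "nat \<Rightarrow> complex mat" where
  "shiftS d = mat d d (\<lambda>(i,j). if i = (j + 1) mod d then 1 else 0)"

definition clockT :: "nat \<Rightarrow> complex mat" where
  "clockT d = mat d d (\<lambda>(i,j). if i = j then tau d ^ (2 * i) else 0)"

definition dispD :: "nat \<Rightarrow> nat \<times> nat \<Rightarrow> complex mat" where
  "dispD d p = (tau d ^ (fst p * snd p)) \<cdot>\<^sub>m ((shiftS d ^\<^sub>m fst p) * (clockT d ^\<^sub>m snd p))"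

definition Zd2 :: "nat \<Rightarrow> (nat \<times> nat) set" where
  "Zd2 d = {0..<d} \<times> {0..<d}"

definition Zd2star :: "nat \<Rightarrow> (nat \<times> nat) set" where
  "Zd2star d = Zd2 d - {(0,0)}"

definition msum :: "nat \<Rightarrow> ('i \<Rightarrow> complex mat) \<Rightarrow> 'i set \<Rightarrow> complex mat" where
  "msum n f S = mat n n (\<lambda>(i,j). \<Sum>x\<in>S. f x $$ (i,j))"

definition opB :: "nat \<Rightarrow> complex mat" where
  "opB d = (complex_of_real (1 / sqrt (real d + 1))) \<cdot>\<^sub>m msum d (dispD d) (Zd2star d)"

definition opU :: "nat \<Rightarrow> complex mat" where
  "opU d = (complex_of_real (1 / real d)) \<cdot>\<^sub>m msum d (dispD d) (Zd2 d)"

definition povmE :: "nat \<Rightarrow> nat \<times> nat \<Rightarrow> complex mat" where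
  "povmE d p = (complex_of_real (1 / (real d)^2)) \<cdot>\<^sub>m
     (1\<^sub>m d + (complex_of_real (1 / sqrt (real d + 1))) \<cdot>\<^sub>m
        (dispD d p * opB d * mat_adjoint (dispD d p)))"

definition hermitian :: "complex mat \<Rightarrow> bool" where
  "hermitian A \<longleftrightarrow> mat_adjoint A = A"

definition psd :: "nat \<Rightarrow> complex mat \<Rightarrow> bool" where
  "psd n A \<longleftrightarrow> A \<in> carrier_mat n n \<and> hermitian A \<and>
     (\<forall>v \<in> carrier_vec n. 0 \<le> Re (\<Sum>i<n. cnj (v $ i) * (A *\<^sub>v v) $ i))"

definition density :: "nat \<Rightarrow> complex mat \<Rightarrow> bool" where
  "density n \<rho> \<longleftrightarrow> psd n \<rho> \<and> mtrace \<rho> = 1"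

definition is_POVM :: "nat \<Rightarrow> ('i \<Rightarrow> complex mat) \<Rightarrow> 'i set \<Rightarrow> bool" where
  "is_POVM n E I \<longleftrightarrow> finite I \<and> (\<forall>r\<in>I. psd n (E r)) \<and> msum n E I = 1\<^sub>m n"

definition symmetric_POVM :: "nat \<Rightarrow> ('i \<Rightarrow> complex mat) \<Rightarrow> 'i set \<Rightarrow> bool" where
  "symmetric_POVM n E I \<longleftrightarrow> is_POVM n E I \<and>
     (\<exists>\<alpha> \<beta> :: real. \<forall>r\<in>I. \<forall>s\<in>I.
        mtrace (E r * E s) = complex_of_real (\<alpha> + (if r = s then \<beta> else 0)))"

definition info_complete :: "nat \<Rightarrow> ('i \<Rightarrow> complex mat) \<Rightarrow> 'i set \<Rightarrow> bool" where
  "info_complete n E I \<longleftrightarrow>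
     (\<forall>\<rho> \<sigma>. density n \<rho> \<longrightarrow> density n \<sigma> \<longrightarrow>
        (\<forall>r\<in>I. mtrace (\<rho> * E r) = mtrace (\<sigma> * E r)) \<longrightarrow> \<rho> = \<sigma>)"

definition hs_norm :: "nat \<Rightarrow> complex mat \<Rightarrow> real" where
  "hs_norm n B = sqrt (Re (mtrace (B * B)) / (real n * (real n - 1)))"

definition mat_rank :: "nat \<Rightarrow> complex mat \<Rightarrow> nat" where
  "mat_rank n A = vec_space.rank n A"

end

theory Submission
  imports Defs
begin

text \<open>
  Conjugating \<open>U\<close> by the displacement operator \<open>D(a,b)\<close> gives the displaced parity operator
  \<open>P(a,b) = D(a,b) U D(a,b)\<^sup>\<dagger>\<close>, whose only nonzero entries are \<open>P(a,b)\<^sub>i\<^sub>j = \<omega>\<^bsup>b(i-j)\<^esup>\<close>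
  for \<open>i + j = 2a\<close> modulo \<open>d\<close>, where \<open>\<omega> = e\<^bsup>2\<pi>i/d\<^esup>\<close>; in particular \<open>U = P(0,0)\<close> maps
  \<open>|r\<rangle>\<close> to \<open>|-r\<rangle>\<close>. Each \<open>P(a,b)\<close> is a Hermitian involution of trace 1, the \<open>P(a,b)\<close> are
  orthogonal with \<open>Tr(P(a,b)\<^sup>2) = d\<close> and sum to \<open>d\<close> times the identity, and since 2 is invertible
  modulo the odd number \<open>d\<close>, Fourier inversion shows that the traces \<open>Tr(X P(a,b))\<close> determine \<open>X\<close>.
  As \<open>B = (d U - 1)/\<surd>(d+1)\<close>, the POVM element at \<open>(a,b)\<close> is \<open>(1 + P(a,b))/(d(d+1))\<close> and the
  corresponding \<open>B''\<close> is \<open>(d P(a,b) - 1)/(d+1)\<close>, so every claim reduces to these identities. In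
  particular the POVM elements are squares of Hermitian matrices, the eigenvalues of \<open>U\<close> are \<open>\<plusminus>1\<close>
  with multiplicities fixed by \<open>Tr U = 1\<close>, and the columns \<open>u\<close> and \<open>2a - u\<close> of the element at
  \<open>(a,b)\<close> are proportional, which leaves \<open>(d+1)/2\<close> independent columns.
\<close>

lemma index_mult_mat_sum:
  "A \<in> carrier_mat n k \<Longrightarrow> B \<in> carrier_mat k l \<Longrightarrow> i < n \<Longrightarrow> j < l \<Longrightarrow>
   (A * B) $$ (i,j) = (\<Sum>t<k. A $$ (i,t) * B $$ (t,j))"
  by (simp add: times_mat_def scalar_prod_def row_def col_def lessThan_atLeast0)

lemma index_mult_mat_vec_sum:
  "A \<in> carrier_mat n k \<Longrightarrow> v \<in> carrier_vec k \<Longrightarrow> i < n \<Longrightarrow> (A *\<^sub>v v) $ i = (\<Sum>j<k. A $$ (i,j) * v $ j)"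
  by (simp add: scalar_prod_def lessThan_atLeast0)

lemma index_mat_adjoint:
  "i < dim_col A \<Longrightarrow> j < dim_row A \<Longrightarrow> mat_adjoint A $$ (i,j) = cnj (A $$ (j,i))"
  unfolding mat_adjoint_def by (simp add: mat_of_rows_index)

lemma dim_mat_adjoint[simp]:
  "dim_row (mat_adjoint A) = dim_col A" "dim_col (mat_adjoint A) = dim_row A"
  unfolding mat_adjoint_def by simp_all

lemma index_msum: "i < n \<Longrightarrow> j < n \<Longrightarrow> msum n f S $$ (i,j) = (\<Sum>x\<in>S. f x $$ (i,j))"
  unfolding msum_def by simp

lemma dim_msum[simp]: "dim_row (msum n f S) = n" "dim_col (msum n f S) = n"
  unfolding msum_def by simp_all

lemma hermitian_iff_entries:
  assumes "A \<in> carrier_mat n n"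
  shows "hermitian A \<longleftrightarrow> (\<forall>i<n. \<forall>j<n. cnj (A $$ (j,i)) = A $$ (i,j))"
  using assms unfolding hermitian_def
  by (auto simp: index_mat_adjoint intro!: eq_matI) (metis index_mat_adjoint carrier_matD)

lemma mtrace_add:
  "A \<in> carrier_mat n n \<Longrightarrow> B \<in> carrier_mat n n \<Longrightarrow> mtrace (A + B) = mtrace A + mtrace B"
  unfolding mtrace_def by (simp add: sum.distrib)

lemma mtrace_minus:
  "A \<in> carrier_mat n n \<Longrightarrow> B \<in> carrier_mat n n \<Longrightarrow> mtrace (A - B) = mtrace A - mtrace B"
  unfolding mtrace_def by (simp add: sum_subtractf)

lemma mtrace_smult: "A \<in> carrier_mat n n \<Longrightarrow> mtrace (c \<cdot>\<^sub>m A) = c * mtrace A"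
  unfolding mtrace_def sum_distrib_left by (intro sum.cong) auto

lemma mtrace_one: "mtrace (1\<^sub>m n) = of_nat n"
  unfolding mtrace_def by simp

lemma mtrace_mult_comm:
  assumes A: "A \<in> carrier_mat n k" and B: "B \<in> carrier_mat k n"
  shows "mtrace (A * B) = mtrace (B * A)"
proof -
  have "mtrace (A * B) = (\<Sum>i<n. \<Sum>t<k. A $$ (i,t) * B $$ (t,i))"
    unfolding mtrace_def using A B carrier_matD[OF A]
    by (intro sum.cong) (auto simp: index_mult_mat_sum simp del: index_mult_mat(1))
  also have "\<dots> = (\<Sum>t<k. \<Sum>i<n. B $$ (t,i) * A $$ (i,t))"
    by (subst sum.swap) (simp add: mult.commute)
  also have "\<dots> = mtrace (B * A)"
    unfolding mtrace_def using A B
    by (intro sum.cong) (auto simp: index_mult_mat_sum carrier_matD simp del: index_mult_mat(1))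
  finally show ?thesis .
qed

lemma mtrace_similar: assumes "similar_mat A B" shows "mtrace A = mtrace B"
proof -
  from similar_matD[OF assms] obtain n P Q where "{A, B, P, Q} \<subseteq> carrier_mat n n"
    and QP: "Q * P = 1\<^sub>m n" and AB: "A = P * B * Q" by auto
  then have P: "P \<in> carrier_mat n n" and B: "B \<in> carrier_mat n n" and Q: "Q \<in> carrier_mat n n" by auto
  have "mtrace A = mtrace ((P * B) * Q)" using AB by simp
  also have "\<dots> = mtrace (Q * (P * B))" using P B Q by (intro mtrace_mult_comm[of _ n n]) auto
  also have "Q * (P * B) = (Q * P) * B" using P B Q by (simp add: assoc_mult_mat)
  also have "\<dots> = B" using QP B by simp
  finally show ?thesis .
qed

lemma mtrace_eq_sum_diag: "mtrace T = sum_list (diag_mat T)"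
  unfolding mtrace_def diag_mat_def
  by (simp add: sum.distinct_set_conv_list[symmetric] atLeast0LessThan[symmetric])

lemma smult_affine_mat:
  fixes P :: "'a :: comm_ring_1 mat"
  shows "P \<in> carrier_mat n n \<Longrightarrow> c \<cdot>\<^sub>m (\<alpha> \<cdot>\<^sub>m P + \<beta> \<cdot>\<^sub>m 1\<^sub>m n) = (c * \<alpha>) \<cdot>\<^sub>m P + (c * \<beta>) \<cdot>\<^sub>m 1\<^sub>m n"
  by (intro eq_matI) (auto simp: algebra_simps)

lemma one_plus_affine_mat:
  fixes P :: "'a :: comm_ring_1 mat"
  shows "P \<in> carrier_mat n n \<Longrightarrow> 1\<^sub>m n + (\<alpha> \<cdot>\<^sub>m P + \<beta> \<cdot>\<^sub>m 1\<^sub>m n) = \<alpha> \<cdot>\<^sub>m P + (1 + \<beta>) \<cdot>\<^sub>m 1\<^sub>m n"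
  by (intro eq_matI) (auto simp: algebra_simps)

lemma mult_affine_mat:
  fixes P Q :: "'a :: comm_ring_1 mat"
  assumes P: "P \<in> carrier_mat n n" and Q: "Q \<in> carrier_mat n n"
  shows "(\<alpha> \<cdot>\<^sub>m P + \<beta> \<cdot>\<^sub>m 1\<^sub>m n) * (\<gamma> \<cdot>\<^sub>m Q + \<delta> \<cdot>\<^sub>m 1\<^sub>m n)
    = (\<alpha> * \<gamma>) \<cdot>\<^sub>m (P * Q) + (\<alpha> * \<delta>) \<cdot>\<^sub>m P + (\<beta> * \<gamma>) \<cdot>\<^sub>m Q + (\<beta> * \<delta>) \<cdot>\<^sub>m 1\<^sub>m n"
proof (rule eq_matI, goal_cases)
  case (1 i j)
  then have i: "i < n" and j: "j < n" using P Q by auto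
  have "((\<alpha> \<cdot>\<^sub>m P + \<beta> \<cdot>\<^sub>m 1\<^sub>m n) * (\<gamma> \<cdot>\<^sub>m Q + \<delta> \<cdot>\<^sub>m 1\<^sub>m n)) $$ (i,j)
      = (\<Sum>k<n. (\<alpha> * P $$ (i,k) + (if i = k then \<beta> else 0)) * (\<gamma> * Q $$ (k,j) + (if k = j then \<delta> else 0)))"
    using P Q i j by (subst index_mult_mat_sum[of _ n n _ n]) (auto intro!: sum.cong)
  also have "\<dots> = \<alpha> * \<gamma> * (\<Sum>k<n. P $$ (i,k) * Q $$ (k,j)) + \<alpha> * \<delta> * P $$ (i,j)
      + \<beta> * \<gamma> * Q $$ (i,j) + (if i = j then \<beta> * \<delta> else 0)"
  proof -
    have "(\<alpha> * P $$ (i,k) + (if i = k then \<beta> else 0)) * (\<gamma> * Q $$ (k,j) + (if k = j then \<delta> else 0))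
        = \<alpha> * \<gamma> * (P $$ (i,k) * Q $$ (k,j)) + (if k = j then \<alpha> * \<delta> * P $$ (i,k) else 0)
          + (if k = i then \<beta> * \<gamma> * Q $$ (k,j) else 0) + (if k = i then (if i = j then \<beta> * \<delta> else 0) else 0)"
      for k by (auto simp: algebra_simps)
    then show ?thesis using i j by (simp add: sum.distrib sum_distrib_left)
  qed
  finally show ?case
    using P Q i j by (simp add: index_mult_mat_sum[of _ n n _ n] del: index_mult_mat(1))
qed (use P Q in auto)

lemma mtrace_mult_affine:
  fixes P Q :: "complex mat"
  assumes "P \<in> carrier_mat n n" "Q \<in> carrier_mat n n"
  shows "mtrace ((\<alpha> \<cdot>\<^sub>m P + \<beta> \<cdot>\<^sub>m 1\<^sub>m n) * (\<gamma> \<cdot>\<^sub>m Q + \<delta> \<cdot>\<^sub>m 1\<^sub>m n))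
    = \<alpha> * \<gamma> * mtrace (P * Q) + \<alpha> * \<delta> * mtrace P + \<beta> * \<gamma> * mtrace Q + \<beta> * \<delta> * of_nat n"
  using assms by (simp add: mult_affine_mat mtrace_add[of _ n] mtrace_smult[of _ n] mtrace_one)

lemma mtrace_mult_affine_right:
  fixes A P :: "complex mat"
  assumes "A \<in> carrier_mat n n" "P \<in> carrier_mat n n"
  shows "mtrace (A * (\<gamma> \<cdot>\<^sub>m P + \<delta> \<cdot>\<^sub>m 1\<^sub>m n)) = \<gamma> * mtrace (A * P) + \<delta> * mtrace A"
proof -
  have "A = 1 \<cdot>\<^sub>m A + 0 \<cdot>\<^sub>m 1\<^sub>m n" using assms by (intro eq_matI) auto
  then have "mtrace (A * (\<gamma> \<cdot>\<^sub>m P + \<delta> \<cdot>\<^sub>m 1\<^sub>m n))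
      = mtrace ((1 \<cdot>\<^sub>m A + 0 \<cdot>\<^sub>m 1\<^sub>m n) * (\<gamma> \<cdot>\<^sub>m P + \<delta> \<cdot>\<^sub>m 1\<^sub>m n))" by simp
  then show ?thesis using assms by (simp add: mtrace_mult_affine)
qed

lemma affine_mult_mat_vec:
  fixes P :: "'a :: comm_ring_1 mat"
  assumes P: "P \<in> carrier_mat n n" and v: "v \<in> carrier_vec n"
  shows "(\<alpha> \<cdot>\<^sub>m P + \<beta> \<cdot>\<^sub>m 1\<^sub>m n) *\<^sub>v v = \<alpha> \<cdot>\<^sub>v (P *\<^sub>v v) + \<beta> \<cdot>\<^sub>v v"
proof (rule eq_vecI)
  fix i assume "i < dim_vec (\<alpha> \<cdot>\<^sub>v (P *\<^sub>v v) + \<beta> \<cdot>\<^sub>v v)"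
  then have i: "i < n" using v by simp
  have "((\<alpha> \<cdot>\<^sub>m P + \<beta> \<cdot>\<^sub>m 1\<^sub>m n) *\<^sub>v v) $ i = (\<Sum>j<n. (\<alpha> * P $$ (i,j) + (if i = j then \<beta> else 0)) * v $ j)"
    using P v i by (subst index_mult_mat_vec_sum[of _ n n]) (auto intro!: sum.cong)
  also have "\<dots> = (\<Sum>j<n. \<alpha> * (P $$ (i,j) * v $ j) + (if j = i then \<beta> * v $ j else 0))"
    by (intro sum.cong) (auto simp: algebra_simps)
  also have "\<dots> = \<alpha> * (\<Sum>j<n. P $$ (i,j) * v $ j) + \<beta> * v $ i"
    using i by (simp add: sum.distrib sum_distrib_left)
  finally show "((\<alpha> \<cdot>\<^sub>m P + \<beta> \<cdot>\<^sub>m 1\<^sub>m n) *\<^sub>v v) $ i = (\<alpha> \<cdot>\<^sub>v (P *\<^sub>v v) + \<beta> \<cdot>\<^sub>v v) $ i"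
    using P v i by (simp add: index_mult_mat_vec_sum[of _ n n] del: index_mult_mat_vec)
qed (use P v in simp)

lemma hermitian_affine:
  fixes A :: "complex mat"
  assumes A: "A \<in> carrier_mat n n" and "hermitian A" and "\<alpha> \<in> \<real>" and "\<beta> \<in> \<real>"
  shows "hermitian (\<alpha> \<cdot>\<^sub>m A + \<beta> \<cdot>\<^sub>m 1\<^sub>m n)"
proof -
  have M: "\<alpha> \<cdot>\<^sub>m A + \<beta> \<cdot>\<^sub>m 1\<^sub>m n \<in> carrier_mat n n" using A by simp
  show ?thesis
    unfolding hermitian_iff_entries[OF M] using assms by (auto simp: hermitian_iff_entries[OF A] Reals_cnj_iff)
qed

lemma psd_mult_self:
  assumes F: "F \<in> carrier_mat n n" and herm: "hermitian F"
  shows "psd n (F * F)"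
proof -
  have cnjF: "cnj (F $$ (j,i)) = F $$ (i,j)" if "i < n" "j < n" for i j
    using herm F that by (simp add: hermitian_iff_entries)
  have "hermitian (F * F)"
    using F by (auto simp: hermitian_iff_entries[OF mult_carrier_mat[OF F F]] index_mult_mat_sum cnjF mult.commute
        simp del: index_mult_mat(1) intro!: sum.cong)
  moreover have "0 \<le> Re (\<Sum>i<n. cnj (v $ i) * ((F * F) *\<^sub>v v) $ i)" if v: "v \<in> carrier_vec n" for v
  proof -
    define y where "y = F *\<^sub>v v"
    have y: "y \<in> carrier_vec n" unfolding y_def using F v by simp
    have cnj_y: "cnj (y $ k) = (\<Sum>i<n. cnj (v $ i) * F $$ (i,k))" if "k < n" for k
    proof -
      have "cnj (y $ k) = (\<Sum>i<n. cnj (F $$ (k,i)) * cnj (v $ i))"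
        unfolding y_def using F v that by (simp add: index_mult_mat_vec_sum del: index_mult_mat_vec)
      also have "\<dots> = (\<Sum>i<n. cnj (v $ i) * F $$ (i,k))"
        using that by (intro sum.cong) (simp_all add: cnjF)
      finally show ?thesis .
    qed
    have "(F * F) *\<^sub>v v = F *\<^sub>v y" unfolding y_def using F v by simp
    then have "(\<Sum>i<n. cnj (v $ i) * ((F * F) *\<^sub>v v) $ i) = (\<Sum>i<n. cnj (v $ i) * (\<Sum>k<n. F $$ (i,k) * y $ k))"
      using index_mult_mat_vec_sum[OF F y] by (intro sum.cong) simp_all
    also have "\<dots> = (\<Sum>i<n. \<Sum>k<n. cnj (v $ i) * F $$ (i,k) * y $ k)"
      by (simp add: sum_distrib_left mult.assoc)
    also have "\<dots> = (\<Sum>k<n. cnj (y $ k) * y $ k)"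
      by (subst sum.swap) (simp add: cnj_y sum_distrib_right)
    also have "\<dots> = of_real (\<Sum>k<n. (Re (y $ k))\<^sup>2 + (Im (y $ k))\<^sup>2)"
      by (simp add: complex_mult_cnj mult.commute)
    finally show ?thesis by (simp add: sum_nonneg)
  qed
  ultimately show ?thesis using F unfolding psd_def by simp
qed

lemma involution_eigenvalue:
  fixes A :: "'a :: field mat"
  assumes A: "A \<in> carrier_mat n n" and AA: "A * A = 1\<^sub>m n" and ev: "eigenvalue A c"
  shows "c = 1 \<or> c = -1"
proof -
  from ev A obtain v where v: "v \<in> carrier_vec n" "v \<noteq> 0\<^sub>v n" and Av: "A *\<^sub>v v = c \<cdot>\<^sub>v v"
    unfolding eigenvalue_def eigenvector_def by auto
  have "v = (A * A) *\<^sub>v v" using v AA by simp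
  also have "\<dots> = A *\<^sub>v (c \<cdot>\<^sub>v v)" using A v by (simp add: Av)
  also have "\<dots> = (c * c) \<cdot>\<^sub>v v" by (simp add: mult_mat_vec[OF A v(1)] Av smult_smult_assoc)
  finally have vv: "v = (c * c) \<cdot>\<^sub>v v" .
  from v obtain i where i: "i < n" "v $ i \<noteq> 0"
    by (metis carrier_vecD eq_vecI index_zero_vec)
  have "v $ i = (c * c) * v $ i" using vv i v by (metis index_smult_vec(1) carrier_vecD)
  then have "c * c = 1" using i by simp
  then show ?thesis by (metis square_eq_1_iff power2_eq_square)
qed

lemma order_prod_linear_factors: "order c (\<Prod>a\<leftarrow>xs. [:- a, 1:]) = count_list xs (c :: 'a :: idom)"
proof (induction xs)
  case Nil
  then show ?case by (simp add: order_0I)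
next
  case (Cons x xs)
  have "[:- x, 1:] * (\<Prod>a\<leftarrow>xs. [:- a, 1:]) \<noteq> 0"
    by (rule no_zero_divisors) (auto simp: prod_list_zero_iff)
  then have "order c ([:- x, 1:] * (\<Prod>a\<leftarrow>xs. [:- a, 1:])) = order c [:- x, 1:] + order c (\<Prod>a\<leftarrow>xs. [:- a, 1:])"
    by (rule order_mult)
  then show ?case using Cons.IH by (simp add: order_linear')
qed

lemma involution_char_poly_orders:
  fixes A :: "complex mat"
  assumes A: "A \<in> carrier_mat n n" and AA: "A * A = 1\<^sub>m n"
  shows "order 1 (char_poly A) + order (-1) (char_poly A) = n"
    and "of_nat (order 1 (char_poly A)) - of_nat (order (-1) (char_poly A)) = mtrace A"
proof -
  from char_poly_factorized[OF A] obtain es where "char_poly A = (\<Prod>a\<leftarrow>es. [:- a, 1:])" by auto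
  from schur_upper_triangular[OF A this] obtain T where
    T: "T \<in> carrier_mat n n" "upper_triangular T" "similar_mat A T" by blast
  define xs where "xs = diag_mat T"
  have cp: "char_poly A = (\<Prod>a\<leftarrow>xs. [:- a, 1:])"
    unfolding xs_def char_poly_similar[OF T(3)] by (rule char_poly_upper_triangular[OF T(1,2)])
  have "x = 1 \<or> x = -1" if "x \<in> set xs" for x
  proof (rule involution_eigenvalue[OF A AA])
    have "poly (char_poly A) x = 0"
      using that by (simp add: cp poly_prod_list_zero_iff)
    then show "eigenvalue A x" using eigenvalue_root_char_poly[OF A] by simp
  qed
  then have "length xs = count_list xs 1 + count_list xs (-1)
      \<and> sum_list xs = of_nat (count_list xs 1) - of_nat (count_list xs (-1))"
    by (induction xs) auto
  moreover have "length xs = n" unfolding xs_def diag_mat_def using T(1) by simp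
  moreover have "sum_list xs = mtrace A"
    unfolding xs_def mtrace_eq_sum_diag[symmetric] by (rule mtrace_similar[OF T(3), symmetric])
  ultimately show "order 1 (char_poly A) + order (-1) (char_poly A) = n"
    and "of_nat (order 1 (char_poly A)) - of_nat (order (-1) (char_poly A)) = mtrace A"
    unfolding cp order_prod_linear_factors by auto
qed

lemma (in vec_space) lin_indpt_of_private_coordinates:
  assumes S: "S \<subseteq> carrier_vec n" "finite S"
    and sup: "\<And>v. v \<in> S \<Longrightarrow> \<exists>i<n. v $ i \<noteq> 0 \<and> (\<forall>u\<in>S. u \<noteq> v \<longrightarrow> u $ i = 0)"
  shows "lin_indpt S"
proof (rule finite_lin_indpt2[OF S(2)])
  show "S \<subseteq> carrier_vec n" using S by simp
  fix a assume lc: "lincomb a S = 0\<^sub>v n"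
  show "\<forall>v\<in>S. a v = 0"
  proof
    fix v assume v: "v \<in> S"
    from sup[OF v] obtain i where i: "i < n" "v $ i \<noteq> 0" and z: "\<forall>u\<in>S. u \<noteq> v \<longrightarrow> u $ i = 0" by auto
    have "lincomb a S $ i = (\<Sum>u\<in>S. a u * u $ i)" using lincomb_index[OF i(1) S(1)] .
    also have "\<dots> = (\<Sum>u\<in>S. if u = v then a u * u $ i else 0)" using z by (intro sum.cong refl) auto
    also have "\<dots> = a v * v $ i" using v S(2) by simp
    finally have "a v * v $ i = 0" using lc i by simp
    then show "a v = 0" using i by simp
  qed
qed

lemma (in vec_space) lin_dep_if_multiple:
  assumes T: "T \<subseteq> carrier_vec n" and u: "u \<in> T" and cu: "c \<cdot>\<^sub>v u \<in> T" and ne: "c \<cdot>\<^sub>v u \<noteq> u"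
  shows "lin_dep T"
proof -
  define f where "f x = (if x = u then c else -1)" for x
  have uc: "u \<in> carrier_vec n" using T u by auto
  have "lincomb f {u, c \<cdot>\<^sub>v u} = 0\<^sub>v n"
  proof (rule eq_vecI)
    fix i assume "i < dim_vec (0\<^sub>v n :: 'a vec)"
    then have i: "i < n" by simp
    have "lincomb f {u, c \<cdot>\<^sub>v u} $ i = f u * u $ i + f (c \<cdot>\<^sub>v u) * (c \<cdot>\<^sub>v u) $ i"
      using lincomb_index[OF i, of "{u, c \<cdot>\<^sub>v u}"] uc ne by simp
    then show "lincomb f {u, c \<cdot>\<^sub>v u} $ i = 0\<^sub>v n $ i" using uc i ne unfolding f_def by simp
  qed (use uc in \<open>simp add: lincomb_dim\<close>)
  then show ?thesis
    using u cu ne by (intro lin_dep_crit[where A = "{u, c \<cdot>\<^sub>v u}" and a = f and v = "c \<cdot>\<^sub>v u"])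
      (auto simp: f_def)
qed

lemma (in vec_space) rank_eq_card_of_column_representatives:
  assumes A: "A \<in> carrier_mat n nc" and SA: "S \<subseteq> set (cols A)" and li: "lin_indpt S"
    and rep: "\<And>v. v \<in> set (cols A) \<Longrightarrow> \<exists>u\<in>S. \<exists>c. v = c \<cdot>\<^sub>v u"
  shows "rank A = card S"
proof (rule rank_card_indpt[OF A])
  have cols: "set (cols A) \<subseteq> carrier_vec n" using A by (auto simp: cols_def)
  show "maximal S (\<lambda>T. T \<subseteq> set (cols A) \<and> lin_indpt T)"
    unfolding maximal_def
  proof (intro conjI allI impI SA li)
    fix T assume T: "S \<subseteq> T \<and> T \<subseteq> set (cols A) \<and> lin_indpt T"
    show "T = S"
    proof (rule ccontr)
      assume "T \<noteq> S"
      then obtain v where "v \<in> T" "v \<notin> S" using T by auto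
      moreover from this rep[of v] T obtain u c where "u \<in> S" "v = c \<cdot>\<^sub>v u" by auto
      ultimately have "lin_dep T" using T cols by (intro lin_dep_if_multiple) auto
      then show False using T by simp
    qed
  qed
qed

lemma (in vec_space) rank_eq_card_of_dominant_columns:
  assumes A: "A \<in> carrier_mat n n" and g: "\<And>k. k \<in> K \<Longrightarrow> g k < n" and K: "finite K"
    and diag: "\<And>k. k \<in> K \<Longrightarrow> A $$ (g k, g k) \<noteq> 0"
    and offdiag: "\<And>k k'. k \<in> K \<Longrightarrow> k' \<in> K \<Longrightarrow> k \<noteq> k' \<Longrightarrow> A $$ (g k, g k') = 0"
    and cover: "\<And>j. j < n \<Longrightarrow> \<exists>k\<in>K. \<exists>c. col A j = c \<cdot>\<^sub>v col A (g k)"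
  shows "rank A = card K"
proof -
  define S where "S = (\<lambda>k. col A (g k)) ` K"
  have cols: "set (cols A) = col A ` {..<n}" using A unfolding cols_def by (auto simp: lessThan_atLeast0)
  have entry: "col A (g k') $ g k = A $$ (g k, g k')" if "k \<in> K" "k' \<in> K" for k k'
    using A g that by simp
  have inj: "inj_on (\<lambda>k. col A (g k)) K"
    by (rule inj_onI, rule ccontr) (metis entry diag offdiag)
  have "lin_indpt S"
  proof (rule lin_indpt_of_private_coordinates)
    show "S \<subseteq> carrier_vec n" unfolding S_def using A by (auto simp: carrier_vecI)
    show "finite S" unfolding S_def using K by simp
    fix v assume "v \<in> S"
    then obtain k where k: "k \<in> K" and v: "v = col A (g k)" unfolding S_def by auto
    show "\<exists>i<n. v $ i \<noteq> 0 \<and> (\<forall>u\<in>S. u \<noteq> v \<longrightarrow> u $ i = 0)"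
    proof (intro exI conjI ballI impI)
      show "v $ g k \<noteq> 0" using entry[OF k k] diag[OF k] unfolding v by simp
      fix u assume "u \<in> S" "u \<noteq> v"
      then obtain k' where "k' \<in> K" "u = col A (g k')" "k \<noteq> k'" unfolding S_def v by auto
      then show "u $ g k = 0" using entry[OF k] offdiag[OF k] by simp
    qed (rule g[OF k])
  qed
  moreover have "\<exists>u\<in>S. \<exists>c. v = c \<cdot>\<^sub>v u" if "v \<in> set (cols A)" for v
    using that cover unfolding cols S_def by blast
  moreover have "S \<subseteq> set (cols A)" unfolding S_def cols using g by auto
  ultimately have "rank A = card S" by (intro rank_eq_card_of_column_representatives[OF A])
  then show ?thesis unfolding S_def using inj by (simp add: card_image)
qed

section \<open>Roots of unity and residues modulo \<open>d\<close>\<close>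

lemma nat_mod_eq_iff_int_dvd: "x mod n = y mod n \<longleftrightarrow> int n dvd (int x - int y)"
  by (metis mod_eq_dvd_iff of_nat_eq_iff zmod_int)

locale weyl_heisenberg =
  fixes d :: nat
  assumes odd_d: "odd d" and d_ge_3: "d \<ge> 3"
begin

lemma d_pos: "d > 0"
  using d_ge_3 by simp

definition \<omega> :: "int \<Rightarrow> complex" where
  "\<omega> k = cis (2 * pi * of_int k / real d)"

lemma \<omega>_add: "\<omega> (k + l) = \<omega> k * \<omega> l"
  unfolding \<omega>_def cis_mult by (simp add: add_divide_distrib distrib_left)

lemma \<omega>_0[simp]: "\<omega> 0 = 1"
  unfolding \<omega>_def by simp

lemma \<omega>_nonzero[simp]: "\<omega> k \<noteq> 0"
  unfolding \<omega>_def by simp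

lemma cnj_\<omega>: "cnj (\<omega> k) = \<omega> (- k)"
  unfolding \<omega>_def cis_cnj by simp

lemma \<omega>_power: "\<omega> k ^ n = \<omega> (k * int n)"
  unfolding \<omega>_def DeMoivre by (simp add: algebra_simps)

lemma \<omega>_mult_d: "\<omega> (int d * k) = 1"
proof -
  have "2 * pi * of_int (int d * k) / real d = 2 * pi * of_int k" using d_pos by simp
  then show ?thesis unfolding \<omega>_def by (simp add: cis_multiple_2pi)
qed

lemma \<omega>_cong: assumes "k mod int d = l mod int d" shows "\<omega> k = \<omega> l"
proof -
  have "\<omega> k = \<omega> (k mod int d) * \<omega> (int d * (k div int d))" for k
    by (metis \<omega>_add mod_mult_div_eq add.commute)
  then have "\<omega> k = \<omega> (k mod int d)" for k by (simp add: \<omega>_mult_d)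
  then show ?thesis using assms by metis
qed

lemma \<omega>_nat_mod: "\<omega> (c * (int (x mod d) - int (y mod d))) = \<omega> (c * (int x - int y))"
  by (rule \<omega>_cong) (metis mod_diff_eq mod_mult_right_eq zmod_int)

lemma \<omega>_eq_1_imp_dvd: assumes "\<omega> k = 1" shows "int d dvd k"
proof -
  from assms have "cos (2 * pi * of_int k / real d) = 1" unfolding \<omega>_def
    by (metis cis.sel(1) one_complex.sel(1))
  then obtain n :: int where "2 * pi * of_int k / real d = of_int n * (2 * pi)"
    by (auto simp: cos_one_2pi_int)
  then have "of_int k = real_of_int n * real d" using d_pos by (simp add: field_simps)
  then have "k = n * int d" by (metis of_int_eq_iff of_int_mult of_int_of_nat_eq)
  then show ?thesis by simp
qed

lemma sum_\<omega>: "(\<Sum>j<d. \<omega> (c * int j)) = (if int d dvd c then of_nat d else 0)"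
proof (cases "int d dvd c")
  case True
  then obtain k where "c = int d * k" by auto
  then show ?thesis using True by (simp add: mult.assoc \<omega>_mult_d)
next
  case False
  then have "\<omega> c \<noteq> 1" using \<omega>_eq_1_imp_dvd by blast
  moreover have "\<omega> c ^ d = 1" using \<omega>_mult_d[of c] by (simp add: \<omega>_power mult.commute)
  ultimately have "(\<Sum>j<d. \<omega> c ^ j) = 0" by (simp add: sum_gp_strict)
  then show ?thesis using False by (simp add: \<omega>_power)
qed

text \<open>\<open>inv2\<close> is the inverse of 2 modulo \<open>d\<close>, and \<open>tau d = \<omega> inv2\<close>.\<close>
definition inv2 :: nat where
  "inv2 = (d + 1) div 2"

lemma two_mult_inv2: "2 * inv2 = d + 1"
  unfolding inv2_def using odd_d by (auto elim!: oddE)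

lemma tau_power: "tau d ^ n = \<omega> (int inv2 * int n)"
proof -
  have "2 * pi * real inv2 / real d = pi / real d + pi"
    using d_pos arg_cong[OF two_mult_inv2, of real] by (simp add: field_simps)
  then have "tau d = \<omega> (int inv2)" unfolding tau_def \<omega>_def minus_cis by simp
  then show ?thesis by (simp add: \<omega>_power)
qed

lemma d_dvd_2_mult_iff: "int d dvd 2 * x \<longleftrightarrow> int d dvd x"
  using odd_d by (simp add: coprime_dvd_mult_right_iff coprime_right_2_iff_odd)

lemma dvd_add_mult_d_iff: "int d dvd (x + int d * k) \<longleftrightarrow> int d dvd x"
  by (metis dvd_add_left_iff dvd_triv_left add.commute)

lemma sum_\<omega>_double:
  assumes "i < d" "i' < d"
  shows "(\<Sum>b<d. \<omega> (2 * (int i' - int i) * int b)) = (if i = i' then of_nat d else 0)"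
proof -
  have "int d dvd 2 * (int i' - int i) \<longleftrightarrow> i = i'"
    using d_dvd_2_mult_iff[of "int i' - int i"] nat_mod_eq_iff_int_dvd[of i' d i] assms by auto
  then show ?thesis by (simp add: sum_\<omega>)
qed

text \<open>Since \<open>d\<close> is odd, the transform \<open>A \<mapsto> (\<Sum>i. A i \<omega>(-2bi))\<^sub>b\<close> is the discrete Fourier
  transform up to the permutation \<open>b \<mapsto> 2b\<close> of frequencies, hence injective.\<close>
lemma double_frequency_dft_eq_0:
  assumes dft: "\<And>b. b < d \<Longrightarrow> (\<Sum>i<d. A i * \<omega> (- (2 * int b * int i))) = 0" and i': "i' < d"
  shows "A i' = 0"
proof -
  have "0 = (\<Sum>b<d. \<omega> (2 * int b * int i') * (\<Sum>i<d. A i * \<omega> (- (2 * int b * int i))))"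
    using dft by simp
  also have "\<dots> = (\<Sum>i<d. A i * (\<Sum>b<d. \<omega> (2 * (int i' - int i) * int b)))"
    unfolding sum_distrib_left by (subst sum.swap) (simp add: \<omega>_add[symmetric] algebra_simps)
  also have "\<dots> = (\<Sum>i<d. if i = i' then A i' * of_nat d else 0)"
  proof (intro sum.cong refl)
    fix i assume "i \<in> {..<d}"
    then show "A i * (\<Sum>b<d. \<omega> (2 * (int i' - int i) * int b)) = (if i = i' then A i' * of_nat d else 0)"
      by (simp only: sum_\<omega>_double[OF _ i'] lessThan_iff) simp
  qed
  also have "\<dots> = A i' * of_nat d"
    using i' by simp
  finally show ?thesis using d_pos by simp
qed

text \<open>For \<open>a, i < d\<close> these are \<open>i - a\<close> and \<open>2 a - i\<close> modulo \<open>d\<close>; adding \<open>d\<close> avoids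
  truncated subtraction.\<close>
definition shift_back :: "nat \<Rightarrow> nat \<Rightarrow> nat" where
  "shift_back a i = (i + d - a) mod d"

definition reflect :: "nat \<Rightarrow> nat \<Rightarrow> nat" where
  "reflect a i = (2 * a + d - i) mod d"

lemma shift_back_less: "shift_back a i < d"
  unfolding shift_back_def using d_pos by simp

lemma reflect_less: "reflect a i < d"
  unfolding reflect_def using d_pos by simp

lemma eq_add_mod_iff_shift_back:
  assumes "i < d" "k < d" "a < d"
  shows "i = (k + a) mod d \<longleftrightarrow> k = shift_back a i"
  using assms unfolding shift_back_def by (simp add: mod_if le_mod_geq) arith

lemma sum_add_mod_delta:
  assumes "i < d" "a < d"
  shows "(\<Sum>k<d. if i = (k + a) mod d then f k else 0) = f (shift_back a i)"
proof -
  have "(\<Sum>k<d. if i = (k + a) mod d then f k else 0) = (\<Sum>k<d. if k = shift_back a i then f k else 0)"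
    using assms by (intro sum.cong) (auto simp: eq_add_mod_iff_shift_back)
  then show ?thesis using shift_back_less by simp
qed

lemma shift_back_inj:
  assumes "a < d" "i < d" "j < d"
  shows "shift_back a i = shift_back a j \<longleftrightarrow> i = j"
proof -
  have "shift_back a i = shift_back a j \<longleftrightarrow> int d dvd (int (i + d - a) - int (j + d - a))"
    unfolding shift_back_def by (rule nat_mod_eq_iff_int_dvd)
  also have "int (i + d - a) - int (j + d - a) = int i - int j" using assms by simp
  finally show ?thesis using assms by (simp add: nat_mod_eq_iff_int_dvd[symmetric])
qed

lemma shift_back_add_mod_eq_0_iff:
  assumes "a < d" "i < d" "j < d"
  shows "(shift_back a i + shift_back a j) mod d = 0 \<longleftrightarrow> (i + j) mod d = (2 * a) mod d"
proof -
  have "(shift_back a i + shift_back a j) mod d = ((i + d - a) + (j + d - a)) mod d"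
    unfolding shift_back_def by (simp add: mod_add_eq)
  then have "(shift_back a i + shift_back a j) mod d = 0
      \<longleftrightarrow> int d dvd (int ((i + d - a) + (j + d - a)) - int 0)"
    using nat_mod_eq_iff_int_dvd[of "(i + d - a) + (j + d - a)" d 0] by simp
  also have "int ((i + d - a) + (j + d - a)) - int 0 = (int (i + j) - int (2 * a)) + int d * 2"
    using assms by simp
  finally show ?thesis by (simp only: dvd_add_mult_d_iff nat_mod_eq_iff_int_dvd)
qed

lemma add_mod_eq_iff_reflect:
  assumes "i < d" "j < d"
  shows "(i + j) mod d = (2 * a) mod d \<longleftrightarrow> j = reflect a i"
proof -
  have "(i + j) mod d = (2 * a) mod d \<longleftrightarrow> int d dvd (int (i + j) - int (2 * a))"
    by (rule nat_mod_eq_iff_int_dvd)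
  also have "\<dots> \<longleftrightarrow> int d dvd (int j - int (2 * a + d - i) + int d * 1)"
    using assms by (simp add: algebra_simps of_nat_diff)
  also have "\<dots> \<longleftrightarrow> j mod d = (2 * a + d - i) mod d"
    by (simp only: dvd_add_mult_d_iff nat_mod_eq_iff_int_dvd)
  finally show ?thesis using assms by (simp add: reflect_def)
qed

lemma reflect_reflect: assumes "i < d" shows "reflect a (reflect a i) = i"
proof -
  have "(reflect a i + i) mod d = (2 * a) mod d"
    using add_mod_eq_iff_reflect[OF assms reflect_less] by (simp add: add.commute)
  then show ?thesis using add_mod_eq_iff_reflect[OF reflect_less assms] by simp
qed

lemma reflect_inj: "i < d \<Longrightarrow> j < d \<Longrightarrow> reflect a i = reflect a j \<longleftrightarrow> i = j"
  by (metis reflect_reflect)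

lemma sum_reflect_delta:
  assumes "i < d"
  shows "(\<Sum>j<d. if (i + j) mod d = (2 * a) mod d then f j else 0) = f (reflect a i)"
proof -
  have "(\<Sum>j<d. if (i + j) mod d = (2 * a) mod d then f j else 0) = (\<Sum>j<d. if j = reflect a i then f j else 0)"
    using assms by (intro sum.cong) (auto simp: add_mod_eq_iff_reflect)
  then show ?thesis using reflect_less by simp
qed

lemma double_mod_eq_iff:
  assumes "a < d" "i < d"
  shows "(2 * i) mod d = (2 * a) mod d \<longleftrightarrow> i = a"
proof -
  have "(2 * i) mod d = (2 * a) mod d \<longleftrightarrow> int d dvd (2 * (int i - int a))"
    by (simp add: nat_mod_eq_iff_int_dvd algebra_simps)
  also have "\<dots> \<longleftrightarrow> int d dvd (int i - int a)" by (rule d_dvd_2_mult_iff)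
  also have "\<dots> \<longleftrightarrow> i mod d = a mod d" by (simp add: nat_mod_eq_iff_int_dvd)
  finally show ?thesis using assms by simp
qed

lemma \<omega>_reflect:
  assumes "i < d"
  shows "\<omega> (c * (int i - int (reflect a i))) = \<omega> (2 * c * int i - 2 * c * int a)"
proof -
  have "\<omega> (c * (int i - int (reflect a i))) = \<omega> (c * (int (i mod d) - int ((2 * a + d - i) mod d)))"
    using assms by (simp add: reflect_def)
  also have "\<dots> = \<omega> (c * (int i - int (2 * a + d - i)))" by (rule \<omega>_nat_mod)
  also have "c * (int i - int (2 * a + d - i)) = (2 * c * int i - 2 * c * int a) + int d * (- c)"
    using assms by (simp add: algebra_simps of_nat_diff)
  finally show ?thesis by (simp only: \<omega>_add \<omega>_mult_d mult_1_right)
qed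

lemma add_mod_inj_below_inv2:
  assumes "k < inv2" "k' < inv2" "(a + k) mod d = (a + k') mod d"
  shows "k = k'"
proof -
  have "int d dvd (int k - int k')" using assms(3) by (simp add: nat_mod_eq_iff_int_dvd)
  then have "k mod d = k' mod d" by (simp add: nat_mod_eq_iff_int_dvd)
  moreover have "k < d" "k' < d" using assms(1,2) two_mult_inv2 by linarith+
  ultimately show ?thesis by simp
qed

lemma add_mod_eq_reflect_below_inv2:
  assumes k: "k < inv2" and k': "k' < inv2" and eq: "(a + k) mod d = reflect a ((a + k') mod d)"
  shows "k = 0 \<and> k' = 0"
proof -
  have "((a + k') mod d + (a + k) mod d) mod d = (2 * a) mod d"
    using add_mod_eq_iff_reflect[of "(a + k') mod d" "(a + k) mod d" a] eq d_pos reflect_less by simp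
  then have "((a + k') + (a + k)) mod d = (2 * a) mod d" by (simp add: mod_add_eq)
  then have "int d dvd (int ((a + k') + (a + k)) - int (2 * a))" by (simp only: nat_mod_eq_iff_int_dvd)
  then have "int d dvd (int k + int k')" by (simp add: algebra_simps)
  moreover have "int k + int k' < int d" using k k' two_mult_inv2 by linarith
  ultimately have "int k + int k' = 0"
    by (metis add_nonneg_nonneg of_nat_0_le_iff order_le_less zdvd_not_zless)
  then show ?thesis by simp
qed

lemma exists_below_inv2:
  assumes j: "j < d"
  shows "\<exists>k<inv2. j = (a + k) mod d \<or> j = reflect a ((a + k) mod d)"
proof -
  define t where "t = shift_back (a mod d) j"
  have t: "t < d" unfolding t_def by (rule shift_back_less)
  have jt: "(a + t) mod d = j"
    using eq_add_mod_iff_shift_back[OF j t, of "a mod d"] d_pos by (simp add: t_def mod_add_left_eq add.commute)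
  show ?thesis
  proof (cases "t < inv2")
    case True
    then show ?thesis using jt by auto
  next
    case False
    define k where "k = d - t"
    have k: "k < inv2" unfolding k_def using False two_mult_inv2 t by linarith
    have "((a + k) mod d + j) mod d = (2 * a) mod d"
    proof -
      have "((a + k) mod d + j) mod d = ((a + k) + (a + t)) mod d" unfolding jt[symmetric] by (simp add: mod_add_eq)
      also have "(a + k) + (a + t) = 2 * a + d * 1" unfolding k_def using t by simp
      finally show ?thesis by simp
    qed
    then have "j = reflect a ((a + k) mod d)" using add_mod_eq_iff_reflect[OF _ j] d_pos by simp
    then show ?thesis using k by auto
  qed
qed

section \<open>Weyl--Heisenberg operators\<close>

lemma dim_shiftS[simp]: "dim_row (shiftS d) = d" "dim_col (shiftS d) = d"
  unfolding shiftS_def by simp_all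

lemma dim_clockT[simp]: "dim_row (clockT d) = d" "dim_col (clockT d) = d"
  unfolding clockT_def by simp_all

lemma dim_dispD[simp]: "dim_row (dispD d p) = d" "dim_col (dispD d p) = d"
  unfolding dispD_def by simp_all

lemma dispD_carrier[simp]: "dispD d p \<in> carrier_mat d d"
  by (rule carrier_matI) simp_all

lemma index_shiftS_power:
  assumes "i < d" "j < d"
  shows "(shiftS d ^\<^sub>m a) $$ (i,j) = (if i = (j + a) mod d then 1 else 0)"
  using assms
proof (induction a arbitrary: i j)
  case 0
  then show ?case by (simp add: shiftS_def)
next
  case (Suc a)
  have "(shiftS d ^\<^sub>m Suc a) $$ (i,j) = (\<Sum>k<d. (shiftS d ^\<^sub>m a) $$ (i,k) * shiftS d $$ (k,j))"
    using Suc.prems by (simp add: times_mat_def scalar_prod_def row_def col_def lessThan_atLeast0)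
  also have "\<dots> = (\<Sum>k<d. if k = (j + 1) mod d then (if i = (k + a) mod d then 1 else 0) else 0)"
    using Suc by (intro sum.cong) (auto simp: shiftS_def)
  also have "\<dots> = (if i = ((j + 1) mod d + a) mod d then 1 else 0)"
    using d_pos by simp
  also have "((j + 1) mod d + a) mod d = (j + Suc a) mod d" by (simp add: mod_add_left_eq)
  finally show ?case .
qed

lemma index_clockT_power:
  assumes "i < d" "j < d"
  shows "(clockT d ^\<^sub>m b) $$ (i,j) = (if i = j then tau d ^ (2 * i * b) else 0)"
  using assms
proof (induction b arbitrary: i j)
  case 0
  then show ?case by (simp add: clockT_def)
next
  case (Suc b)
  have "(clockT d ^\<^sub>m Suc b) $$ (i,j) = (\<Sum>k<d. (clockT d ^\<^sub>m b) $$ (i,k) * clockT d $$ (k,j))"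
    using Suc.prems by (simp add: times_mat_def scalar_prod_def row_def col_def lessThan_atLeast0)
  also have "\<dots> = (\<Sum>k<d. if k = j then (if i = k then tau d ^ (2 * i * b) else 0) * tau d ^ (2 * k) else 0)"
    using Suc by (intro sum.cong) (auto simp: clockT_def)
  also have "\<dots> = (if i = j then tau d ^ (2 * i * Suc b) else 0)"
    using Suc.prems by (simp add: power_add[symmetric] algebra_simps)
  finally show ?case .
qed

lemma index_dispD:
  assumes "i < d" "j < d"
  shows "dispD d (a,b) $$ (i,j) = (if i = (j + a) mod d then \<omega> (int inv2 * int (a * b) + int b * int j) else 0)"
proof -
  have "dispD d (a,b) $$ (i,j) = tau d ^ (a * b) * (\<Sum>k<d. (shiftS d ^\<^sub>m a) $$ (i,k) * (clockT d ^\<^sub>m b) $$ (k,j))"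
    using assms unfolding dispD_def
    by (simp add: times_mat_def scalar_prod_def row_def col_def lessThan_atLeast0)
  also have "(\<Sum>k<d. (shiftS d ^\<^sub>m a) $$ (i,k) * (clockT d ^\<^sub>m b) $$ (k,j))
     = (\<Sum>k<d. if k = j then (if i = (k + a) mod d then 1 else 0) * tau d ^ (2 * k * b) else 0)"
    using assms by (intro sum.cong) (auto simp: index_shiftS_power index_clockT_power)
  also have "\<dots> = (if i = (j + a) mod d then tau d ^ (2 * j * b) else 0)"
    using assms by simp
  also have "tau d ^ (2 * j * b) = \<omega> (int b * int j)"
  proof -
    have "int inv2 * int (2 * j * b) = int b * int j + int d * (int j * int b)"
      using arg_cong[OF two_mult_inv2, of int] by (simp add: algebra_simps)
    then show ?thesis by (simp only: tau_power \<omega>_add \<omega>_mult_d mult_1_right)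
  qed
  finally show ?thesis by (simp add: tau_power \<omega>_add)
qed

lemma index_conj_dispD:
  assumes X: "X \<in> carrier_mat d d" and a: "a < d" and i: "i < d" and j: "j < d"
  shows "(dispD d (a,b) * X * mat_adjoint (dispD d (a,b))) $$ (i,j)
       = X $$ (shift_back a i, shift_back a j) * \<omega> (int b * (int i - int j))"
proof -
  let ?D = "dispD d (a,b)" and ?c = "\<lambda>i. \<omega> (int inv2 * int (a * b) + int b * int (shift_back a i))"
  have DX: "(?D * X) $$ (i,l) = ?c i * X $$ (shift_back a i, l)" if i: "i < d" and l: "l < d" for i l
  proof -
    have "(?D * X) $$ (i,l) = (\<Sum>k<d. ?D $$ (i,k) * X $$ (k,l))"
      using X i l by (intro index_mult_mat_sum) auto
    also have "\<dots> = (\<Sum>k<d. if i = (k + a) mod d then \<omega> (int inv2 * int (a * b) + int b * int k) * X $$ (k,l) else 0)"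
      using i by (intro sum.cong) (auto simp: index_dispD)
    also have "\<dots> = ?c i * X $$ (shift_back a i, l)"
      using a i by (simp add: sum_add_mod_delta)
    finally show ?thesis .
  qed
  have "(?D * X * mat_adjoint ?D) $$ (i,j) = (\<Sum>l<d. (?D * X) $$ (i,l) * mat_adjoint ?D $$ (l,j))"
    using X i j by (intro index_mult_mat_sum) (auto intro!: carrier_matI)
  also have "\<dots> = (\<Sum>l<d. if j = (l + a) mod d then (?D * X) $$ (i,l) * cnj (\<omega> (int inv2 * int (a * b) + int b * int l)) else 0)"
    using j by (intro sum.cong) (auto simp: index_mat_adjoint index_dispD)
  also have "\<dots> = X $$ (shift_back a i, shift_back a j) * (?c i * cnj (?c j))"
    using a j DX[OF i shift_back_less] by (simp add: sum_add_mod_delta)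
  also have "?c i * cnj (?c j) = \<omega> (int b * (int (shift_back a i) - int (shift_back a j)))"
    by (simp add: cnj_\<omega> \<omega>_add[symmetric] algebra_simps)
  also have "\<dots> = \<omega> (int b * (int (i + d - a) - int (j + d - a)))"
    unfolding shift_back_def by (rule \<omega>_nat_mod)
  also have "int (i + d - a) - int (j + d - a) = int i - int j" using a by simp
  finally show ?thesis .
qed

lemma sum_Zd2: "(\<Sum>p\<in>Zd2 d. f p) = (\<Sum>a<d. \<Sum>b<d. f (a,b))"
  unfolding Zd2_def by (simp add: sum.cartesian_product lessThan_atLeast0)

lemma finite_Zd2[simp]: "finite (Zd2 d)"
  unfolding Zd2_def by simp

lemma dim_opU[simp]: "dim_row (opU d) = d" "dim_col (opU d) = d"
  unfolding opU_def by simp_all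

lemma dim_opB[simp]: "dim_row (opB d) = d" "dim_col (opB d) = d"
  unfolding opB_def by simp_all

lemma opU_carrier[simp]: "opU d \<in> carrier_mat d d"
  by (rule carrier_matI) simp_all

lemma opB_carrier[simp]: "opB d \<in> carrier_mat d d"
  by (rule carrier_matI) simp_all

section \<open>Displaced parity operators\<close>

text \<open>In the paper's notation \<open>parity a b\<close> is \<open>D\<^sub>p U D\<^sub>p\<^sup>\<dagger>\<close> for \<open>p = (a, b)\<close>
  (lemma \<open>conj_dispD_opU\<close>).\<close>
definition parity :: "nat \<Rightarrow> nat \<Rightarrow> complex mat" where
  "parity a b = mat d d (\<lambda>(i,j). if (i + j) mod d = (2 * a) mod d then \<omega> (int b * (int i - int j)) else 0)"

lemma dim_parity[simp]: "dim_row (parity a b) = d" "dim_col (parity a b) = d"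
  unfolding parity_def by simp_all

lemma parity_carrier[simp]: "parity a b \<in> carrier_mat d d"
  by (rule carrier_matI) simp_all

lemma index_parity:
  "i < d \<Longrightarrow> j < d \<Longrightarrow>
    parity a b $$ (i,j) = (if (i + j) mod d = (2 * a) mod d then \<omega> (int b * (int i - int j)) else 0)"
  unfolding parity_def by simp

lemma index_parity_reflect:
  "i < d \<Longrightarrow> j < d \<Longrightarrow> parity a b $$ (i,j) = (if i = reflect a j then \<omega> (int b * (int i - int j)) else 0)"
  by (simp add: index_parity add_mod_eq_iff_reflect[symmetric] add.commute)

lemma sum_parity_row:
  assumes "i < d"
  shows "(\<Sum>k<d. parity a b $$ (i,k) * f k) = \<omega> (int b * (int i - int (reflect a i))) * f (reflect a i)"
proof -
  have "(\<Sum>k<d. parity a b $$ (i,k) * f k)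
      = (\<Sum>k<d. if (i + k) mod d = (2 * a) mod d then \<omega> (int b * (int i - int k)) * f k else 0)"
    using assms by (intro sum.cong) (auto simp: index_parity)
  also have "\<dots> = \<omega> (int b * (int i - int (reflect a i))) * f (reflect a i)"
    using assms by (rule sum_reflect_delta)
  finally show ?thesis .
qed

lemma sum_parity_col:
  assumes "j < d"
  shows "(\<Sum>k<d. f k * parity a b $$ (k,j)) = f (reflect a j) * \<omega> (int b * (int (reflect a j) - int j))"
proof -
  have "(\<Sum>k<d. f k * parity a b $$ (k,j))
      = (\<Sum>k<d. if (j + k) mod d = (2 * a) mod d then f k * \<omega> (int b * (int k - int j)) else 0)"
    using assms by (intro sum.cong) (auto simp: index_parity add.commute)
  also have "\<dots> = f (reflect a j) * \<omega> (int b * (int (reflect a j) - int j))"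
    using assms by (rule sum_reflect_delta)
  finally show ?thesis .
qed

lemma hermitian_parity: "hermitian (parity a b)"
proof -
  have "cnj (\<omega> (int b * (int j - int i))) = \<omega> (int b * (int i - int j))" for i j
    by (simp add: cnj_\<omega> algebra_simps)
  then show ?thesis by (auto simp: hermitian_iff_entries[OF parity_carrier] index_parity add.commute)
qed

lemma parity_mult_self: "parity a b * parity a b = 1\<^sub>m d"
proof (rule eq_matI, goal_cases)
  case (1 i j)
  then have i: "i < d" and j: "j < d" by auto
  have "(parity a b * parity a b) $$ (i,j) = (\<Sum>k<d. parity a b $$ (i,k) * parity a b $$ (k,j))"
    using i j by (intro index_mult_mat_sum) auto
  also have "\<dots> = \<omega> (int b * (int i - int (reflect a i))) * parity a b $$ (reflect a i, j)"
    using i by (rule sum_parity_row)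
  also have "\<dots> = (if i = j then 1 else 0)"
    using i j reflect_less[of a i]
    by (auto simp: index_parity_reflect reflect_reflect reflect_inj \<omega>_add[symmetric] algebra_simps)
  finally show ?case using i j by simp
qed auto

lemma mtrace_parity: assumes "a < d" shows "mtrace (parity a b) = 1"
proof -
  have "mtrace (parity a b) = (\<Sum>i<d. if i = a then 1 else 0)"
    unfolding mtrace_def using assms
    by (intro sum.cong) (auto simp: index_parity mult_2[symmetric] double_mod_eq_iff)
  then show ?thesis using assms by simp
qed

lemma mtrace_parity_mult_eq_sum:
  "mtrace (parity a b * parity a' b')
    = (\<Sum>i<d. \<omega> (int b * (int i - int (reflect a i))) * parity a' b' $$ (reflect a i, i))"
proof -
  have "mtrace (parity a b * parity a' b') = (\<Sum>i<d. \<Sum>k<d. parity a b $$ (i,k) * parity a' b' $$ (k,i))"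
    unfolding mtrace_def
    by (intro sum.cong) (simp_all add: index_mult_mat_sum[of _ d d _ d] del: index_mult_mat(1))
  also have "\<dots> = (\<Sum>i<d. \<omega> (int b * (int i - int (reflect a i))) * parity a' b' $$ (reflect a i, i))"
    by (intro sum.cong) (simp_all add: sum_parity_row)
  finally show ?thesis .
qed

lemma mtrace_parity_mult_distinct_centres:
  assumes a: "a < d" and a': "a' < d" and "a \<noteq> a'"
  shows "mtrace (parity a b * parity a' b') = 0"
proof -
  have "parity a' b' $$ (reflect a i, i) = 0" if i: "i < d" for i
  proof -
    have "(reflect a i + i) mod d = (2 * a) mod d"
      using add_mod_eq_iff_reflect[OF i reflect_less[of a i], of a] by (simp add: add.commute)
    then show ?thesis
      using i reflect_less[of a i] \<open>a \<noteq> a'\<close> double_mod_eq_iff[OF a' a] by (simp add: index_parity)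
  qed
  then show ?thesis by (simp add: mtrace_parity_mult_eq_sum)
qed

lemma mtrace_parity_mult_same_centre:
  assumes b: "b < d" and b': "b' < d"
  shows "mtrace (parity a b * parity a b') = (if b = b' then of_nat d else 0)"
proof -
  have "\<omega> (int b * (int i - int (reflect a i))) * parity a b' $$ (reflect a i, i)
      = \<omega> (- 2 * (int b - int b') * int a) * \<omega> ((2 * (int b - int b')) * int i)" if i: "i < d" for i
  proof -
    have "\<omega> (int b * (int i - int (reflect a i))) * parity a b' $$ (reflect a i, i)
        = \<omega> ((int b - int b') * (int i - int (reflect a i)))"
      using i reflect_less[of a i] by (simp add: index_parity_reflect \<omega>_add[symmetric] algebra_simps)
    also have "\<dots> = \<omega> (2 * (int b - int b') * int i - 2 * (int b - int b') * int a)"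
      using i by (rule \<omega>_reflect)
    also have "\<dots> = \<omega> (- 2 * (int b - int b') * int a) * \<omega> ((2 * (int b - int b')) * int i)"
      by (simp add: \<omega>_add[symmetric] algebra_simps)
    finally show ?thesis .
  qed
  then have "mtrace (parity a b * parity a b')
      = \<omega> (- 2 * (int b - int b') * int a) * (\<Sum>i<d. \<omega> ((2 * (int b - int b')) * int i))"
    by (simp add: mtrace_parity_mult_eq_sum sum_distrib_left)
  moreover have "int d dvd 2 * (int b - int b') \<longleftrightarrow> b = b'"
    using d_dvd_2_mult_iff[of "int b - int b'"] nat_mod_eq_iff_int_dvd[of b d b'] b b' by simp
  ultimately show ?thesis by (cases "b = b'") (simp_all add: sum_\<omega>)
qed

lemma mtrace_parity_mult:
  assumes "a < d" "a' < d" "b < d" "b' < d"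
  shows "mtrace (parity a b * parity a' b') = (if a = a' \<and> b = b' then of_nat d else 0)"
  using assms mtrace_parity_mult_distinct_centres mtrace_parity_mult_same_centre
  by (cases "a = a'") auto

lemma sum_index_parity:
  assumes i: "i < d" and j: "j < d"
  shows "(\<Sum>a<d. \<Sum>b<d. parity a b $$ (i,j)) = (if i = j then of_nat d else 0)"
proof -
  have "(\<Sum>a<d. \<Sum>b<d. parity a b $$ (i,j))
      = (\<Sum>a<d. if (i + j) mod d = (2 * a) mod d then (\<Sum>b<d. \<omega> ((int i - int j) * int b)) else 0)"
    using i j by (intro sum.cong) (auto simp: index_parity mult.commute)
  also have "\<dots> = (\<Sum>a<d. if (i + j) mod d = (2 * a) mod d then (if i = j then of_nat d else 0) else 0)"
  proof -
    have "int d dvd (int i - int j) \<longleftrightarrow> i = j"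
      using nat_mod_eq_iff_int_dvd[of i d j] i j by simp
    then have "(\<Sum>b<d. \<omega> ((int i - int j) * int b)) = (if i = j then of_nat d else 0)"
      using sum_\<omega>[of "int i - int j"] by simp
    then show ?thesis by (simp only:)
  qed
  also have "\<dots> = (if i = j then of_nat d else 0)"
  proof (cases "i = j")
    case True
    then have "(\<Sum>a<d. if (i + j) mod d = (2 * a) mod d then (if i = j then of_nat d else 0) else 0)
        = (\<Sum>a<d. if a = i then of_nat d else (0::complex))"
      using i by (intro sum.cong) (auto simp: mult_2[symmetric] double_mod_eq_iff)
    then show ?thesis using True i by simp
  qed simp
  finally show ?thesis .
qed

lemma mtrace_mult_parity:
  assumes X: "X \<in> carrier_mat d d"
  shows "mtrace (X * parity a b) = (\<Sum>i<d. X $$ (i, reflect a i) * \<omega> (int b * (int (reflect a i) - int i)))"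
proof -
  have "mtrace (X * parity a b) = (\<Sum>i<d. \<Sum>k<d. X $$ (i,k) * parity a b $$ (k,i))"
    unfolding mtrace_def using X
    by (intro sum.cong) (simp_all add: index_mult_mat_sum[of _ d d _ d] del: index_mult_mat(1))
  also have "\<dots> = (\<Sum>i<d. X $$ (i, reflect a i) * \<omega> (int b * (int (reflect a i) - int i)))"
    by (intro sum.cong) (simp_all add: sum_parity_col)
  finally show ?thesis .
qed

lemma parity_mtrace_determines:
  assumes X: "X \<in> carrier_mat d d" and tr: "\<And>a b. a < d \<Longrightarrow> b < d \<Longrightarrow> mtrace (X * parity a b) = 0"
  shows "X = 0\<^sub>m d d"
proof (rule eq_matI)
  fix i j assume "i < dim_row (0\<^sub>m d d :: complex mat)" "j < dim_col (0\<^sub>m d d :: complex mat)"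
  then have i: "i < d" and j: "j < d" by simp_all
  define a where "a = ((i + j) * inv2) mod d"
  have a: "a < d" unfolding a_def using d_pos by simp
  have "(2 * a) mod d = ((i + j) * (2 * inv2)) mod d"
    unfolding a_def by (simp add: mod_mult_right_eq ac_simps)
  also have "\<dots> = ((i + j) + d * (i + j)) mod d" unfolding two_mult_inv2 by (simp add: algebra_simps)
  also have "\<dots> = (i + j) mod d" by simp
  finally have j_eq: "j = reflect a i" using add_mod_eq_iff_reflect[OF i j, of a] by simp
  have "X $$ (i', reflect a i') = 0" if "i' < d" for i'
  proof (rule double_frequency_dft_eq_0[OF _ that])
    fix b assume b: "b < d"
    have "\<omega> (2 * int b * int a) * (\<Sum>i<d. X $$ (i, reflect a i) * \<omega> (- (2 * int b * int i)))
        = mtrace (X * parity a b)"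
    proof -
      have "\<omega> (int b * (int (reflect a i) - int i)) = \<omega> (2 * int b * int a) * \<omega> (- (2 * int b * int i))"
        if "i < d" for i
        using \<omega>_reflect[OF that, of "- int b" a] by (simp add: \<omega>_add[symmetric] algebra_simps)
      then show ?thesis
        unfolding mtrace_mult_parity[OF X] sum_distrib_left by (intro sum.cong) (simp_all add: ac_simps)
    qed
    also have "\<dots> = 0" using tr[OF a b] .
    finally show "(\<Sum>i<d. X $$ (i, reflect a i) * \<omega> (- (2 * int b * int i))) = 0"
      by simp
  qed
  then show "X $$ (i,j) = 0\<^sub>m d d $$ (i,j)" using i j j_eq by simp
qed (use X in simp_all)

lemma opU_eq_parity: "opU d = parity 0 0"
proof (rule eq_matI, goal_cases)
  case (1 i j)
  then have i: "i < d" and j: "j < d" by auto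
  have "opU d $$ (i,j) = (1 / of_nat d) * (\<Sum>a<d. \<Sum>b<d. dispD d (a,b) $$ (i,j))"
    using i j unfolding opU_def by (simp add: index_msum sum_Zd2)
  also have "(\<Sum>a<d. \<Sum>b<d. dispD d (a,b) $$ (i,j))
     = (\<Sum>a<d. if i = (j + a) mod d then (\<Sum>b<d. \<omega> (int inv2 * int (a * b) + int b * int j)) else 0)"
    using i j by (intro sum.cong) (auto simp: index_dispD add.commute)
  also have "\<dots> = (\<Sum>b<d. \<omega> ((int inv2 * int (shift_back j i) + int j) * int b))"
    using i j by (simp add: sum_add_mod_delta algebra_simps)
  also have "\<dots> = (if int d dvd (int inv2 * int (shift_back j i) + int j) then of_nat d else 0)"
    by (rule sum_\<omega>)
  also have "int d dvd (int inv2 * int (shift_back j i) + int j) \<longleftrightarrow> (i + j) mod d = 0"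
  proof -
    have "int d dvd (int inv2 * int (shift_back j i) + int j)
        \<longleftrightarrow> int d dvd (2 * int inv2 * int (shift_back j i) + 2 * int j)"
      using d_dvd_2_mult_iff[of "int inv2 * int (shift_back j i) + int j"] by (simp add: algebra_simps)
    also have "2 * int inv2 * int (shift_back j i) + 2 * int j
        = int (shift_back j i) + 2 * int j + int d * int (shift_back j i)"
      using arg_cong[OF two_mult_inv2, of int] by (simp add: algebra_simps)
    also have "int d dvd \<dots> \<longleftrightarrow> (shift_back j i + 2 * j) mod d = 0 mod d"
      by (simp only: dvd_add_mult_d_iff nat_mod_eq_iff_int_dvd) simp
    also have "(shift_back j i + 2 * j) mod d = (i + d - j + 2 * j) mod d"
      unfolding shift_back_def by (simp add: mod_add_left_eq)
    also have "i + d - j + 2 * j = (i + j) + d * 1" using j by simp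
    finally show ?thesis by simp
  qed
  finally show ?case using i j d_pos by (simp add: index_parity)
qed (simp_all add: opU_def)

abbreviation sqrt_d1 :: complex where
  "sqrt_d1 \<equiv> complex_of_real (sqrt (real d + 1))"

lemma sqrt_d1_square: "sqrt_d1 * sqrt_d1 = of_nat d + 1"
proof -
  have "sqrt (real d + 1) * sqrt (real d + 1) = real d + 1" by simp
  then show ?thesis by (metis of_real_mult of_real_of_nat_eq of_real_add of_real_1)
qed

lemma sqrt_d1_nonzero: "sqrt_d1 \<noteq> 0"
  by simp

lemma sqrt_d1_eq: "(of_nat d + 1) / sqrt_d1 = sqrt_d1"
proof -
  have "(of_nat d + 1) / sqrt_d1 = (sqrt_d1 * sqrt_d1) / sqrt_d1" by (simp only: sqrt_d1_square)
  also have "\<dots> = sqrt_d1" using sqrt_d1_nonzero by (rule nonzero_mult_div_cancel_right)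
  finally show ?thesis .
qed

lemma opB_eq_affine: "opB d = (of_nat d / sqrt_d1) \<cdot>\<^sub>m opU d + (- 1 / sqrt_d1) \<cdot>\<^sub>m 1\<^sub>m d"
proof (rule eq_matI, goal_cases)
  case (1 i j)
  then have i: "i < d" and j: "j < d" by auto
  have "(0, 0) \<in> Zd2 d" unfolding Zd2_def using d_pos by simp
  then have "(\<Sum>p\<in>Zd2star d. dispD d p $$ (i,j)) = (\<Sum>p\<in>Zd2 d. dispD d p $$ (i,j)) - dispD d (0,0) $$ (i,j)"
    unfolding Zd2star_def by (simp add: sum_diff1)
  also have "(\<Sum>p\<in>Zd2 d. dispD d p $$ (i,j)) = of_nat d * opU d $$ (i,j)"
    using i j d_pos unfolding opU_def by (simp add: index_msum)
  also have "dispD d (0,0) $$ (i,j) = (if i = j then 1 else 0)"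
    using i j by (simp add: index_dispD)
  finally show ?case
    using i j unfolding opB_def by (simp add: index_msum of_real_divide diff_divide_distrib)
qed (simp_all add: opB_def)

lemma opU_eq_affine_opB: "opU d = complex_of_real (1 / real d) \<cdot>\<^sub>m (1\<^sub>m d + sqrt_d1 \<cdot>\<^sub>m opB d)"
proof (rule eq_matI, goal_cases)
  case (1 i j)
  then have i: "i < d" and j: "j < d" by simp_all
  have "sqrt_d1 * opB d $$ (i,j) = of_nat d * opU d $$ (i,j) - (if i = j then 1 else 0)"
    using i j sqrt_d1_nonzero by (cases "i = j") (simp_all add: opB_eq_affine field_simps)
  then show ?case using i j d_pos by (simp add: of_real_divide)
qed simp_all

lemma conj_dispD_opU:
  assumes a: "a < d"
  shows "dispD d (a,b) * opU d * mat_adjoint (dispD d (a,b)) = parity a b"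
proof (rule eq_matI, goal_cases)
  case (1 i j)
  then have i: "i < d" and j: "j < d" by auto
  show ?case
    unfolding index_conj_dispD[OF opU_carrier a i j] using i j shift_back_less
    by (simp add: opU_eq_parity index_parity shift_back_add_mod_eq_0_iff a)
qed simp_all

lemma conj_dispD_opB:
  assumes a: "a < d"
  shows "dispD d (a,b) * opB d * mat_adjoint (dispD d (a,b))
    = (of_nat d / sqrt_d1) \<cdot>\<^sub>m parity a b + (- 1 / sqrt_d1) \<cdot>\<^sub>m 1\<^sub>m d"
proof (rule eq_matI, goal_cases)
  case (1 i j)
  then have i: "i < d" and j: "j < d" by auto
  have "parity a b $$ (i,j) = opU d $$ (shift_back a i, shift_back a j) * \<omega> (int b * (int i - int j))"
    using index_conj_dispD[OF opU_carrier a i j] conj_dispD_opU[OF a] by simp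
  moreover have "opB d $$ (shift_back a i, shift_back a j)
      = of_nat d / sqrt_d1 * opU d $$ (shift_back a i, shift_back a j) + (if i = j then - 1 / sqrt_d1 else 0)"
    using shift_back_less shift_back_inj[OF a i j] by (simp add: opB_eq_affine)
  ultimately show ?case
    unfolding index_conj_dispD[OF opB_carrier a i j] using i j
    by (cases "i = j") (simp_all add: algebra_simps)
qed simp_all

section \<open>The spectra of \<open>U\<close> and \<open>B\<close>\<close>

lemma hermitian_opU: "hermitian (opU d)"
  unfolding opU_eq_parity by (rule hermitian_parity)

lemma opU_mult_self: "opU d * opU d = 1\<^sub>m d"
  by (simp add: opU_eq_parity parity_mult_self)

lemma mtrace_opU: "mtrace (opU d) = 1"
  unfolding opU_eq_parity using d_pos by (rule mtrace_parity)

lemma opU_mult_unit_vec: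
  assumes "k < d"
  shows "opU d *\<^sub>v unit_vec d k = unit_vec d ((d - k) mod d)"
proof (rule eq_vecI)
  fix i assume "i < dim_vec (unit_vec d ((d - k) mod d))"
  then have i: "i < d" by simp
  have "(opU d *\<^sub>v unit_vec d k) $ i = (\<Sum>j<d. opU d $$ (i,j) * unit_vec d k $ j)"
    using i by (intro index_mult_mat_vec_sum) auto
  also have "\<dots> = parity 0 0 $$ (i,k)"
    using assms by (simp add: opU_eq_parity unit_vec_def if_distrib cong: if_cong)
  also have "\<dots> = (if i = (d - k) mod d then 1 else 0)"
    using i assms by (simp add: index_parity_reflect reflect_def)
  finally show "(opU d *\<^sub>v unit_vec d k) $ i = unit_vec d ((d - k) mod d) $ i"
    using i by simp
qed simp

lemma opU_eigenvalue_multiplicities: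
  "order 1 (char_poly (opU d)) = (d + 1) div 2 \<and> order (-1) (char_poly (opU d)) = (d - 1) div 2"
proof -
  have "of_nat (order 1 (char_poly (opU d))) - of_nat (order (-1) (char_poly (opU d))) = (1 :: complex)"
    using involution_char_poly_orders(2)[OF opU_carrier opU_mult_self] by (simp add: mtrace_opU)
  then have "(of_nat (order 1 (char_poly (opU d))) :: complex) = of_nat (order (-1) (char_poly (opU d)) + 1)"
    by (simp add: diff_eq_eq)
  then have "order 1 (char_poly (opU d)) = order (-1) (char_poly (opU d)) + 1"
    by (simp only: of_nat_eq_iff)
  then show ?thesis using involution_char_poly_orders(1)[OF opU_carrier opU_mult_self] by auto
qed

lemma opB_eigenvalue_min: "eigenvalue (opB d) (- sqrt_d1)"
proof -
  define v :: "complex vec" where "v = unit_vec d 1 - unit_vec d (d - 1)"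
  have v: "v \<in> carrier_vec d" unfolding v_def by simp
  have "v $ 1 = 1" unfolding v_def using d_ge_3 by simp
  then have "v \<noteq> 0\<^sub>v d" using d_ge_3 by auto
  have Uv: "opU d *\<^sub>v v = - v"
  proof -
    have "opU d *\<^sub>v v = opU d *\<^sub>v unit_vec d 1 - opU d *\<^sub>v unit_vec d (d - 1)"
      unfolding v_def by (rule mult_minus_distrib_mat_vec[of _ d d]) auto
    also have "\<dots> = - v" unfolding v_def using d_ge_3 by (intro eq_vecI) (auto simp: opU_mult_unit_vec)
    finally show ?thesis .
  qed
  have "of_nat d / sqrt_d1 * (- x) + - 1 / sqrt_d1 * x = - sqrt_d1 * x" for x
  proof -
    have "of_nat d / sqrt_d1 * (- x) + - 1 / sqrt_d1 * x = - ((of_nat d + 1) / sqrt_d1) * x"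
      using sqrt_d1_nonzero by (simp add: field_simps)
    then show ?thesis by (simp only: sqrt_d1_eq)
  qed
  then have "opB d *\<^sub>v v = (- sqrt_d1) \<cdot>\<^sub>v v"
    unfolding opB_eq_affine affine_mult_mat_vec[OF opU_carrier v] Uv
    using v by (intro eq_vecI) simp_all
  then show ?thesis unfolding eigenvalue_def eigenvector_def using v \<open>v \<noteq> 0\<^sub>v d\<close> by auto
qed

lemma opB_eigenvalue_bound:
  assumes "eigenvalue (opB d) ev"
  shows "ev \<in> \<real> \<and> - sqrt (real d + 1) \<le> Re ev"
proof -
  from assms obtain v where v: "v \<in> carrier_vec d" "v \<noteq> 0\<^sub>v d" and Bv: "opB d *\<^sub>v v = ev \<cdot>\<^sub>v v"
    unfolding eigenvalue_def eigenvector_def by auto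
  define l where "l = (sqrt_d1 * ev + 1) / of_nat d"
  have ev: "ev = (of_nat d * l - 1) / sqrt_d1"
    unfolding l_def using d_pos sqrt_d1_nonzero by (simp add: field_simps)
  have Uv: "opU d *\<^sub>v v = l \<cdot>\<^sub>v v"
  proof (rule eq_vecI)
    fix i assume "i < dim_vec (l \<cdot>\<^sub>v v)"
    then have i: "i < d" using v by simp
    have "of_nat d / sqrt_d1 * (opU d *\<^sub>v v) $ i + - 1 / sqrt_d1 * v $ i = ev * v $ i"
      using arg_cong[OF Bv, of "\<lambda>w. w $ i"] i v
      unfolding opB_eq_affine affine_mult_mat_vec[OF opU_carrier v(1)] by simp
    then have "of_nat d * (opU d *\<^sub>v v) $ i = (sqrt_d1 * ev + 1) * v $ i"
      using sqrt_d1_nonzero by (simp add: field_simps)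
    then show "(opU d *\<^sub>v v) $ i = (l \<cdot>\<^sub>v v) $ i"
      using i v d_pos unfolding l_def by (simp add: field_simps)
  qed (use v in simp)
  have "eigenvalue (opU d) l"
    unfolding eigenvalue_def eigenvector_def using v Uv by auto
  then have "l = 1 \<or> l = -1"
    using involution_eigenvalue[OF opU_carrier opU_mult_self] by blast
  then show ?thesis
  proof
    assume "l = 1"
    then have "ev = complex_of_real ((real d - 1) / sqrt (real d + 1))"
      unfolding ev by (simp add: of_real_divide)
    moreover have "- sqrt (real d + 1) \<le> (real d - 1) / sqrt (real d + 1)"
    proof -
      have "0 \<le> (real d - 1) / sqrt (real d + 1)" using d_pos by simp
      then show ?thesis using real_sqrt_ge_zero[of "real d + 1"] by linarith
    qed
    ultimately show ?thesis by simp
  next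
    assume "l = -1"
    then have "ev = - ((of_nat d + 1) / sqrt_d1)"
      unfolding ev by (simp add: minus_divide_left)
    then show ?thesis unfolding sqrt_d1_eq by simp
  qed
qed

section \<open>The POVM\<close>

lemma inverse_sqrt_d1_mult: "complex_of_real (1 / sqrt (real d + 1)) * (x / sqrt_d1) = x / (of_nat d + 1)"
proof -
  have "complex_of_real (1 / sqrt (real d + 1)) * (x / sqrt_d1) = x / (sqrt_d1 * sqrt_d1)"
    by (simp add: of_real_divide)
  then show ?thesis by (simp only: sqrt_d1_square)
qed

lemma of_nat_d_plus_1_nonzero: "(of_nat d + 1 :: complex) \<noteq> 0"
  by (metis of_nat_Suc of_nat_eq_0_iff add.commute nat.distinct(1))

definition povm_weight :: complex where
  "povm_weight = 1 / (of_nat d * (of_nat d + 1))"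

lemma povm_weight_real: "povm_weight = complex_of_real (1 / (real d * (real d + 1)))"
  unfolding povm_weight_def by (simp add: of_real_divide)

lemma povm_weight_nonzero: "povm_weight \<noteq> 0"
  unfolding povm_weight_def using d_pos of_nat_d_plus_1_nonzero by simp

lemma povmE_eq_affine:
  assumes a: "a < d"
  shows "povmE d (a,b) = povm_weight \<cdot>\<^sub>m parity a b + povm_weight \<cdot>\<^sub>m 1\<^sub>m d"
proof -
  let ?c = "complex_of_real (1 / (real d)\<^sup>2)" and ?e = "complex_of_real (1 / sqrt (real d + 1))"
  have "?c * (?e * (of_nat d / sqrt_d1)) = povm_weight" "?c * (1 + ?e * (- 1 / sqrt_d1)) = povm_weight"
    unfolding inverse_sqrt_d1_mult povm_weight_def using d_pos of_nat_d_plus_1_nonzero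
    by (simp_all add: of_real_divide power2_eq_square field_simps)
  moreover have "povmE d (a,b) = (?c * (?e * (of_nat d / sqrt_d1))) \<cdot>\<^sub>m parity a b
      + (?c * (1 + ?e * (- 1 / sqrt_d1))) \<cdot>\<^sub>m 1\<^sub>m d"
    unfolding povmE_def conj_dispD_opB[OF a]
    by (simp only: smult_affine_mat[OF parity_carrier] one_plus_affine_mat[OF parity_carrier])
  ultimately show ?thesis by simp
qed

lemma dim_povmE[simp]: "dim_row (povmE d p) = d" "dim_col (povmE d p) = d"
  unfolding povmE_def by simp_all

lemma povmE_carrier[simp]: "povmE d p \<in> carrier_mat d d"
  by (rule carrier_matI) simp_all

lemma index_povmE:
  assumes "a < d" "i < d" "j < d"
  shows "povmE d (a,b) $$ (i,j) = povm_weight * (parity a b $$ (i,j) + (if i = j then 1 else 0))"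
  using assms by (simp add: povmE_eq_affine algebra_simps)

lemma psd_povmE:
  assumes a: "a < d"
  shows "psd d (povmE d (a,b))"
proof -
  define \<kappa> where "\<kappa> = complex_of_real (sqrt (1 / (2 * (real d * (real d + 1)))))"
  have "\<kappa> * \<kappa> = complex_of_real (1 / (2 * (real d * (real d + 1))))"
    unfolding \<kappa>_def by (simp flip: of_real_mult)
  then have \<kappa>_sq: "\<kappa> * \<kappa> = povm_weight / 2"
    by (simp add: of_real_divide povm_weight_def)
  have "povmE d (a,b) = (\<kappa> \<cdot>\<^sub>m parity a b + \<kappa> \<cdot>\<^sub>m 1\<^sub>m d) * (\<kappa> \<cdot>\<^sub>m parity a b + \<kappa> \<cdot>\<^sub>m 1\<^sub>m d)"
    unfolding mult_affine_mat[OF parity_carrier parity_carrier] parity_mult_self povmE_eq_affine[OF a] \<kappa>_sq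
    by (intro eq_matI) auto
  moreover have "hermitian (\<kappa> \<cdot>\<^sub>m parity a b + \<kappa> \<cdot>\<^sub>m 1\<^sub>m d)"
    by (rule hermitian_affine[OF parity_carrier hermitian_parity]) (simp_all add: \<kappa>_def)
  ultimately show ?thesis using psd_mult_self by simp
qed

lemma msum_povmE: "msum d (povmE d) (Zd2 d) = 1\<^sub>m d"
proof (rule eq_matI, goal_cases)
  case (1 i j)
  then have i: "i < d" and j: "j < d" by auto
  have "msum d (povmE d) (Zd2 d) $$ (i,j) = (\<Sum>a<d. \<Sum>b<d. povm_weight * (parity a b $$ (i,j) + (if i = j then 1 else 0)))"
    using i j by (simp add: index_msum sum_Zd2 index_povmE)
  also have "\<dots> = povm_weight * (\<Sum>a<d. \<Sum>b<d. parity a b $$ (i,j) + (if i = j then 1 else 0))"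
    by (simp only: sum_distrib_left)
  also have "\<dots> = povm_weight * ((\<Sum>a<d. \<Sum>b<d. parity a b $$ (i,j)) + of_nat d * of_nat d * (if i = j then 1 else 0))"
    by (simp only: sum.distrib sum_constant card_lessThan of_nat_mult) (simp add: algebra_simps)
  also have "\<dots> = povm_weight * (of_nat d * (of_nat d + 1)) * (if i = j then 1 else 0)"
    using i j by (simp add: sum_index_parity algebra_simps)
  also have "povm_weight * (of_nat d * (of_nat d + 1)) = 1"
    unfolding povm_weight_def using d_pos of_nat_d_plus_1_nonzero by simp
  finally show ?case using i j by simp
qed simp_all

lemma is_POVM_povmE: "is_POVM d (povmE d) (Zd2 d)"
  unfolding is_POVM_def using psd_povmE msum_povmE by (auto simp: Zd2_def)

lemma symmetric_POVM_povmE: "symmetric_POVM d (povmE d) (Zd2 d)"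
  unfolding symmetric_POVM_def
proof (intro conjI is_POVM_povmE exI ballI)
  fix p q assume p: "p \<in> Zd2 d" and q: "q \<in> Zd2 d"
  obtain a b a' b' where pq: "p = (a,b)" "q = (a',b')" and ab: "a < d" "b < d" "a' < d" "b' < d"
    using p q unfolding Zd2_def by auto
  have "mtrace (povmE d p * povmE d q)
      = povm_weight * povm_weight * (of_nat d + 2 + (if p = q then of_nat d else 0))"
    unfolding pq povmE_eq_affine[OF ab(1)] povmE_eq_affine[OF ab(3)]
    using ab by (simp add: mtrace_mult_affine mtrace_parity mtrace_parity_mult algebra_simps)
  also have "\<dots> = complex_of_real ((1 / (real d * (real d + 1)))\<^sup>2 * (real d + 2)
      + (if p = q then (1 / (real d * (real d + 1)))\<^sup>2 * real d else 0))"
  proof -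
    define c where "c = 1 / (real d * (real d + 1))"
    have "povm_weight = complex_of_real c" unfolding povm_weight_real c_def ..
    then show ?thesis unfolding c_def[symmetric] by (cases "p = q") (simp_all add: power2_eq_square algebra_simps)
  qed
  finally show "mtrace (povmE d p * povmE d q) = complex_of_real ((1 / (real d * (real d + 1)))\<^sup>2 * (real d + 2)
      + (if p = q then (1 / (real d * (real d + 1)))\<^sup>2 * real d else 0))" .
qed

lemma info_complete_povmE: "info_complete d (povmE d) (Zd2 d)"
  unfolding info_complete_def
proof (intro allI impI)
  fix \<rho> \<sigma> assume "density d \<rho>" "density d \<sigma>"
    and eq: "\<forall>p\<in>Zd2 d. mtrace (\<rho> * povmE d p) = mtrace (\<sigma> * povmE d p)"
  then have \<rho>: "\<rho> \<in> carrier_mat d d" "mtrace \<rho> = 1" and \<sigma>: "\<sigma> \<in> carrier_mat d d" "mtrace \<sigma> = 1"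
    unfolding density_def psd_def by auto
  have "mtrace ((\<rho> - \<sigma>) * parity a b) = 0" if ab: "a < d" "b < d" for a b
  proof -
    have "povm_weight * mtrace (\<rho> * parity a b) = povm_weight * mtrace (\<sigma> * parity a b)"
      using eq ab \<rho> \<sigma> unfolding Zd2_def
      by (auto simp: povmE_eq_affine mtrace_mult_affine_right)
    then have "mtrace (\<rho> * parity a b) = mtrace (\<sigma> * parity a b)" using povm_weight_nonzero by simp
    then show ?thesis
      using \<rho> \<sigma> by (simp add: minus_mult_distrib_mat[OF \<rho>(1) \<sigma>(1) parity_carrier] mtrace_minus[of _ d])
  qed
  then have "\<rho> - \<sigma> = 0\<^sub>m d d" using \<rho> \<sigma> by (intro parity_mtrace_determines) auto
  then have "\<rho> $$ (i,j) = \<sigma> $$ (i,j)" if "i < d" "j < d" for i j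
  proof -
    have "(\<rho> - \<sigma>) $$ (i,j) = 0" using \<open>\<rho> - \<sigma> = 0\<^sub>m d d\<close> that by simp
    then show ?thesis using that \<rho> \<sigma> by simp
  qed
  then show "\<rho> = \<sigma>" using \<rho> \<sigma> by (intro eq_matI) auto
qed

lemma povmE_diag_nonzero:
  assumes "a < d" "j < d"
  shows "povmE d (a,b) $$ (j,j) \<noteq> 0"
proof -
  have "parity a b $$ (j,j) + 1 \<noteq> 0" using assms(2) by (simp add: index_parity)
  then show ?thesis using assms povm_weight_nonzero by (simp add: index_povmE)
qed

lemma povmE_offdiag_below_inv2:
  assumes a: "a < d" and k: "k < inv2" and k': "k' < inv2" and "k \<noteq> k'"
  shows "povmE d (a,b) $$ ((a + k) mod d, (a + k') mod d) = 0"
proof -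
  have "(a + k) mod d \<noteq> (a + k') mod d" using add_mod_inj_below_inv2[OF k k'] assms(4) by auto
  moreover have "(a + k) mod d \<noteq> reflect a ((a + k') mod d)"
    using add_mod_eq_reflect_below_inv2[OF k k'] assms(4) by auto
  ultimately show ?thesis using a d_pos by (simp add: index_povmE index_parity_reflect)
qed

lemma col_povmE_reflect:
  assumes a: "a < d" and u: "u < d"
  shows "col (povmE d (a,b)) (reflect a u) = \<omega> (int b * (int u - int (reflect a u))) \<cdot>\<^sub>v col (povmE d (a,b)) u"
proof (rule eq_vecI)
  fix i assume "i < dim_vec (\<omega> (int b * (int u - int (reflect a u))) \<cdot>\<^sub>v col (povmE d (a,b)) u)"
  then have i: "i < d" by simp
  have "\<omega> (int b * (int u - int (reflect a u))) * \<omega> (int b * (int (reflect a u) - int u)) = 1"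
    by (simp add: \<omega>_add[symmetric] algebra_simps)
  then show "col (povmE d (a,b)) (reflect a u) $ i = (\<omega> (int b * (int u - int (reflect a u))) \<cdot>\<^sub>v col (povmE d (a,b)) u) $ i"
    using a i u reflect_less[of a u]
    by (auto simp: index_povmE index_parity_reflect reflect_reflect algebra_simps)
qed simp

lemma rank_povmE:
  assumes a: "a < d"
  shows "mat_rank d (povmE d (a,b)) = inv2"
proof -
  interpret vs: vec_space "TYPE(complex)" d .
  have "vs.rank (povmE d (a,b)) = card {..<inv2}"
  proof (rule vs.rank_eq_card_of_dominant_columns[where g = "\<lambda>k. (a + k) mod d"])
    fix j assume j: "j < d"
    from exists_below_inv2[OF j, of a] obtain k where k: "k < inv2"
      and "j = (a + k) mod d \<or> j = reflect a ((a + k) mod d)" by auto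
    then show "\<exists>k\<in>{..<inv2}. \<exists>c. col (povmE d (a,b)) j = c \<cdot>\<^sub>v col (povmE d (a,b)) ((a + k) mod d)"
      using col_povmE_reflect[OF a, of "(a + k) mod d" b] d_pos by (metis lessThan_iff mod_less_divisor one_smult_vec)
  qed (use a d_pos povmE_diag_nonzero povmE_offdiag_below_inv2 in auto)
  then show ?thesis unfolding mat_rank_def by simp
qed

abbreviation traceless_part :: "nat \<Rightarrow> nat \<Rightarrow> complex mat" where
  "traceless_part a b \<equiv>
    complex_of_real (1 / sqrt (real d + 1)) \<cdot>\<^sub>m (dispD d (a,b) * opB d * mat_adjoint (dispD d (a,b)))"

lemma traceless_part_eq_affine:
  assumes a: "a < d"
  shows "complex_of_real (1 / sqrt (real d + 1)) \<cdot>\<^sub>m (dispD d (a,b) * opB d * mat_adjoint (dispD d (a,b)))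
    = (of_nat d / (of_nat d + 1)) \<cdot>\<^sub>m parity a b + (- 1 / (of_nat d + 1)) \<cdot>\<^sub>m 1\<^sub>m d"
  unfolding conj_dispD_opB[OF a] smult_affine_mat[OF parity_carrier] inverse_sqrt_d1_mult ..

lemma hermitian_traceless_part: "a < d \<Longrightarrow> hermitian (traceless_part a b)"
  unfolding traceless_part_eq_affine
  by (rule hermitian_affine[OF parity_carrier hermitian_parity]) (simp_all add: of_real_divide[symmetric])

lemma mtrace_traceless_part: "a < d \<Longrightarrow> mtrace (traceless_part a b) = 0"
  unfolding traceless_part_eq_affine
  using of_nat_d_plus_1_nonzero by (simp add: mtrace_add[of _ d] mtrace_smult[of _ d] mtrace_parity mtrace_one field_simps)

lemma hs_norm_traceless_part:
  assumes "a < d" "b < d"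
  shows "hs_norm d (traceless_part a b) = 1 / sqrt (real d + 1)"
proof -
  let ?\<alpha> = "of_nat d / (of_nat d + 1) :: complex" and ?\<beta> = "- 1 / (of_nat d + 1) :: complex"
  have "mtrace (traceless_part a b * traceless_part a b)
      = ?\<alpha> * ?\<alpha> * of_nat d + ?\<alpha> * ?\<beta> + ?\<beta> * ?\<alpha> + ?\<beta> * ?\<beta> * of_nat d"
    unfolding traceless_part_eq_affine[OF assms(1)] using assms
    by (simp only: mtrace_mult_affine[OF parity_carrier parity_carrier] mtrace_parity mtrace_parity_mult
        if_True simp_thms mult_1_right)
  also have "\<dots> = (of_nat d * of_nat d * of_nat d - of_nat d) / ((of_nat d + 1) * (of_nat d + 1))"
    by (simp add: diff_divide_distrib add_divide_distrib)
  also have "of_nat d * of_nat d * of_nat d - of_nat d = (of_nat d * (of_nat d - 1)) * (of_nat d + 1 :: complex)"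
    by (simp add: algebra_simps)
  also have "\<dots> / ((of_nat d + 1) * (of_nat d + 1)) = of_nat d * (of_nat d - 1) / (of_nat d + 1)"
    using of_nat_d_plus_1_nonzero by simp
  also have "\<dots> = complex_of_real (real d * (real d - 1) / (real d + 1))"
    by (simp add: of_real_divide)
  finally have "mtrace (traceless_part a b * traceless_part a b)
      = complex_of_real (real d * (real d - 1) / (real d + 1))" .
  moreover have "real d * (real d - 1) \<noteq> 0" using d_ge_3 by simp
  ultimately show ?thesis unfolding hs_norm_def by (simp add: real_sqrt_divide)
qed

end

theorem mainTheorem8:
  fixes d :: nat
  assumes "odd d" and "d \<ge> 3"
  shows "opU d = (complex_of_real (1 / real d)) \<cdot>\<^sub>m (1\<^sub>m d + complex_of_real (sqrt (real d + 1)) \<cdot>\<^sub>m opB d)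
         \<and> hermitian (opU d)
         \<and> opU d * opU d = 1\<^sub>m d
         \<and> mtrace (opU d) = 1
         \<and> order 1 (char_poly (opU d)) = (d + 1) div 2
         \<and> order (-1) (char_poly (opU d)) = (d - 1) div 2
         \<and> (\<forall>r<d. opU d *\<^sub>v unit_vec d r = unit_vec d ((d - r) mod d))
         \<and> eigenvalue (opB d) (- complex_of_real (sqrt (real d + 1)))
         \<and> (\<forall>ev. eigenvalue (opB d) ev \<longrightarrow> ev \<in> \<real> \<and> - sqrt (real d + 1) \<le> Re ev)
         \<and> is_POVM d (povmE d) (Zd2 d)
         \<and> symmetric_POVM d (povmE d) (Zd2 d)
         \<and> info_complete d (povmE d) (Zd2 d)
         \<and> (\<forall>p\<in>Zd2 d. mat_rank d (povmE d p) = (d + 1) div 2)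
         \<and> (\<forall>p\<in>Zd2 d.
              let B' = dispD d p * opB d * mat_adjoint (dispD d p) ;
                  B'' = complex_of_real (1 / sqrt (real d + 1)) \<cdot>\<^sub>m B'
              in povmE d p = complex_of_real (1 / (real d)^2) \<cdot>\<^sub>m (1\<^sub>m d + B'')
                 \<and> hermitian B'' \<and> mtrace B'' = 0
                 \<and> hs_norm d B'' = 1 / sqrt (real d + 1))"
proof -
  interpret weyl_heisenberg d using assms by unfold_locales
  have "\<forall>p\<in>Zd2 d. mat_rank d (povmE d p) = (d + 1) div 2"
    using rank_povmE unfolding Zd2_def inv2_def by auto
  moreover have "\<forall>p\<in>Zd2 d.
      let B' = dispD d p * opB d * mat_adjoint (dispD d p) ;
          B'' = complex_of_real (1 / sqrt (real d + 1)) \<cdot>\<^sub>m B'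
      in povmE d p = complex_of_real (1 / (real d)^2) \<cdot>\<^sub>m (1\<^sub>m d + B'')
         \<and> hermitian B'' \<and> mtrace B'' = 0 \<and> hs_norm d B'' = 1 / sqrt (real d + 1)"
    using hermitian_traceless_part mtrace_traceless_part hs_norm_traceless_part
    unfolding Zd2_def Let_def povmE_def by auto
  ultimately show ?thesis
    using opU_eq_affine_opB hermitian_opU opU_mult_self mtrace_opU opU_eigenvalue_multiplicities
      opU_mult_unit_vec opB_eigenvalue_min opB_eigenvalue_bound
      is_POVM_povmE symmetric_POVM_povmE info_complete_povmE
    by auto
qed

end
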